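(* Under the standing assumptions below, let $q,r\in[1,\infty]$ be the exponents from these assumptions and let $p\in\{q\}\cup(\min(q,r),\max(q,r))$. Then $S:X\to Y$ with the differential $\partial_B^{sw}S:X\rightrightarrows\mathcal{L}(X,Y)$ is Newton differentiable w.r.t. perturbations in $U$ with values in $L^p(\Omega)$, i.e., for every $x\in X$, $$\sup_{G\in\partial_B^{sw}S(x+z)}\frac{\|S(x+z)-S(x)-Gz\|_{L^p(\Omega)}}{\|z\|_U}\to0\quad\text{as } z\in U\setminus\{0\},\ \|z\|_U\to0.$$
   Context: Standing assumptions: $(\Omega,\Sigma,\mu)$ is a complete measure space with real Lebesgue spaces $L^p(\Omega)$, $p\in[1,\infty]$. $Y$ is a real separable reflexive Banach space with $Y\subset L^q(\Omega)$ and the inclusion $Y\hookrightarrow L^q(\Omega)$ continuous and compact, for a fixed $q\in[1,\infty]$. $X$ is a real separable Banach space. $U$ is a real reflexive Banach space with $U\subset X$ and the inclusion $U\hookrightarrow X$ continuous and compact. The map $S:X\to Y$ satisfies $S(\lambda x_1+(1-\lambda)x_2)\le\lambda S(x_1)+(1-\lambda)S(x_2)$ $\mu$-a.e. in $\Omega$ for all $x_1,x_2\in X$, $\lambda\in[0,1]$; and there is an exponent $r\in[1,\infty]$ such that for every $x\in X$ there are $C,\varepsilon>0$ with $\|S(x_1)-S(x_2)\|_Y\le C\|x_1-x_2\|_X$ for all $x_1,x_2\in X$ with $\|x_i-x\|_X\le\varepsilon$, $i=1,2$, and $\|S(x_1+z)-S(x_1)\|_{L^r(\Omega)}\le C\|z\|_U$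 for all $x_1\in X$, $z\in U$ with $\|x_1-x\|_X\le\varepsilon$, $\|z\|_U\le\varepsilon$. $S$ is Gâteaux differentiable at $x\in X$ if for all $z\in X$ the limit $S'(x;z):=\lim_{t\to0^+}(S(x+tz)-S(x))/t$ exists in $Y$ and $z\mapsto S'(x;z)$ is linear and continuous; then $S'(x):=S'(x;\cdot)\in\mathcal{L}(X,Y)$. $\mathcal{D}_S$ denotes the set of points where $S$ is Gâteaux differentiable. WOT convergence $G_n\to G$ in $\mathcal{L}(X,Y)$ means $G_nz\rightharpoonup Gz$ weakly in $Y$ for all $z\in X$. The strong-weak Bouligand differential is $\partial_B^{sw}S(x):=\{G\in\mathcal{L}(X,Y): \exists\{x_n\}\subset\mathcal{D}_S \text{ with } x_n\to x \text{ in } X \text{ and } S'(x_n)\to G \text{ in the WOT}\}$. *)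

theory Defs
  imports "HOL-Analysis.Analysis" "HOL-Probability.Essential_Supremum"
begin

definition Lpnorm :: "'w measure \<Rightarrow> ennreal \<Rightarrow> ('w \<Rightarrow> real) \<Rightarrow> ennreal" where
  "Lpnorm M p f =
     (if p = \<infinity> then esssup M (\<lambda>\<omega>. ennreal \<bar>f \<omega>\<bar>)
      else (let I = (\<integral>\<^sup>+ \<omega>. ennreal (\<bar>f \<omega>\<bar> powr enn2real p) \<partial>M)
            in if I = \<infinity> then \<infinity> else ennreal (enn2real I powr (1 / enn2real p))))"

definition separable_nv :: "'a::real_normed_vector itself \<Rightarrow> bool" where
  "separable_nv _ \<longleftrightarrow> (\<exists>D::'a set. countable D \<and> closure D = UNIV)"

definition reflexive_nv :: "'a::real_normed_vector itself \<Rightarrow> bool" where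
  "reflexive_nv _ \<longleftrightarrow>
     (\<forall>\<phi> :: ('a \<Rightarrow>\<^sub>L real) \<Rightarrow>\<^sub>L real. \<exists>y::'a. \<forall>f. blinfun_apply \<phi> f = blinfun_apply f y)"

definition weakly_tendsto :: "(nat \<Rightarrow> 'a::real_normed_vector) \<Rightarrow> 'a \<Rightarrow> bool" where
  "weakly_tendsto ys y \<longleftrightarrow>
     (\<forall>f :: 'a \<Rightarrow>\<^sub>L real. (\<lambda>n. blinfun_apply f (ys n)) \<longlonglongrightarrow> blinfun_apply f y)"

text \<open>J realises Y as a subspace of L^q(M) (elements = a.e.-classes), with continuous and
  compact inclusion.\<close>
definition compact_Lp_embedding ::
  "'w measure \<Rightarrow> ennreal \<Rightarrow> ('y::real_normed_vector \<Rightarrow> 'w \<Rightarrow> real) \<Rightarrow> bool" where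
  "compact_Lp_embedding M q J \<longleftrightarrow>
     (\<forall>y. J y \<in> borel_measurable M) \<and>
     (\<forall>(a::real) (y::'y) y'. AE \<omega> in M. J (a *\<^sub>R y + y') \<omega> = a * J y \<omega> + J y' \<omega>) \<and>
     (\<forall>y. (AE \<omega> in M. J y \<omega> = 0) \<longrightarrow> y = 0) \<and>
     (\<exists>C::real. \<forall>y. Lpnorm M q (J y) \<le> ennreal (C * norm y)) \<and>
     (\<forall>ys::nat \<Rightarrow> 'y. bounded (range ys) \<longrightarrow>
        (\<exists>(\<sigma>::nat \<Rightarrow> nat) (f::'w \<Rightarrow> real). strict_mono \<sigma> \<and> f \<in> borel_measurable M \<and> Lpnorm M q f < \<infinity> \<and>
               (\<lambda>n. Lpnorm M q (\<lambda>\<omega>. J (ys (\<sigma> n)) \<omega> - f \<omega>)) \<longlonglongrightarrow> 0))"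

definition compact_embedding :: "('u::real_normed_vector \<Rightarrow> 'x::real_normed_vector) \<Rightarrow> bool" where
  "compact_embedding E \<longleftrightarrow> bounded_linear E \<and> inj E \<and>
     (\<forall>us::nat \<Rightarrow> 'u. bounded (range us) \<longrightarrow> (\<exists>(\<sigma>::nat \<Rightarrow> nat) (l::'x). strict_mono \<sigma> \<and> (\<lambda>n. E (us (\<sigma> n))) \<longlonglongrightarrow> l))"

definition gateaux_deriv :: "('x::real_normed_vector \<Rightarrow> 'y::real_normed_vector) \<Rightarrow> 'x \<Rightarrow> ('x \<Rightarrow>\<^sub>L 'y) \<Rightarrow> bool" where
  "gateaux_deriv S x G \<longleftrightarrow>
     (\<forall>z. ((\<lambda>t. (S (x + t *\<^sub>R z) - S x) /\<^sub>R t) \<longlongrightarrow> blinfun_apply G z) (at_right 0))"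

definition gateaux_points :: "('x::real_normed_vector \<Rightarrow> 'y::real_normed_vector) \<Rightarrow> 'x set" where
  "gateaux_points S = {x. \<exists>G. gateaux_deriv S x G}"

definition gateaux :: "('x::real_normed_vector \<Rightarrow> 'y::real_normed_vector) \<Rightarrow> 'x \<Rightarrow> ('x \<Rightarrow>\<^sub>L 'y)" where
  "gateaux S x = (THE G. gateaux_deriv S x G)"

definition bouligand_sw :: "('x::real_normed_vector \<Rightarrow> 'y::real_normed_vector) \<Rightarrow> 'x \<Rightarrow> ('x \<Rightarrow>\<^sub>L 'y) set" where
  "bouligand_sw S x = {G. \<exists>xs. (\<forall>n. xs n \<in> gateaux_points S) \<and> xs \<longlonglongrightarrow> x \<and>
       (\<forall>z. weakly_tendsto (\<lambda>n. blinfun_apply (gateaux S (xs n)) z) (blinfun_apply G z))}"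

end

theory Submission
  imports Defs
begin

text \<open>Let \<open>G\<close> lie in the strong-weak Bouligand differential at \<open>y = x + E z\<close>. The a.e.
  convexity of \<open>S\<close> gives \<open>S' y' v \<le> S (y' + v) - S y'\<close> a.e. at Gateaux points \<open>y'\<close>; the
  cone of a.e. nonpositive elements of \<open>Y\<close> is closed and convex, hence weakly sequentially
  closed, so the same secant inequality holds for \<open>G\<close>. Taking \<open>v = \<plusminus>E z\<close> dominates the
  remainder \<open>S (x + E z) - S x - G (E z)\<close>, uniformly in \<open>G\<close>, by the second difference
  \<open>S (x + 2 E z) - 2 S (x + E z) + S x\<close>. This is \<open>O(\<parallel>z\<parallel>)\<close> in \<open>L\<^sup>r\<close> by the Lipschitz
  hypothesis and \<open>o(\<parallel>z\<parallel>)\<close> in \<open>L\<^sup>q\<close>: along a ray the difference quotients are monotone and,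
  by compactness of \<open>Y \<hookrightarrow> L\<^sup>q\<close>, Cauchy at dyadic scales, while compactness of \<open>U \<hookrightarrow> X\<close> lets
  the normalised directions converge. Interpolation between \<open>L\<^sup>q\<close> and \<open>L\<^sup>r\<close> yields the
  \<open>L\<^sup>p\<close> estimate.\<close>

section \<open>\<open>L\<^sup>p\<close> estimates\<close>

lemma Lpnorm_le_iff_nn_integral:
  assumes "0 < P" "0 \<le> c"
  shows "Lpnorm M (ennreal P) f \<le> ennreal c \<longleftrightarrow>
    (\<integral>\<^sup>+\<omega>. ennreal (\<bar>f \<omega>\<bar> powr P) \<partial>M) \<le> ennreal (c powr P)"
proof (cases "(\<integral>\<^sup>+\<omega>. ennreal (\<bar>f \<omega>\<bar> powr P) \<partial>M) = \<infinity>")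
  case True
  then show ?thesis using assms by (simp add: Lpnorm_def top_unique)
next
  case False
  then obtain i where i: "(\<integral>\<^sup>+\<omega>. ennreal (\<bar>f \<omega>\<bar> powr P) \<partial>M) = ennreal i" "0 \<le> i"
    by (cases "\<integral>\<^sup>+\<omega>. ennreal (\<bar>f \<omega>\<bar> powr P) \<partial>M" rule: ennreal_cases) auto
  have "i powr (1/P) \<le> c \<longleftrightarrow> i \<le> c powr P"
  proof
    assume "i powr (1/P) \<le> c"
    then have "(i powr (1/P)) powr P \<le> c powr P" using assms by (intro powr_mono2) auto
    then show "i \<le> c powr P" using assms i by (simp add: powr_powr)
  next
    assume "i \<le> c powr P"
    then have "i powr (1/P) \<le> (c powr P) powr (1/P)" using assms i by (intro powr_mono2) auto
    then show "i powr (1/P) \<le> c" using assms by (simp add: powr_powr)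
  qed
  then show ?thesis using assms i by (simp add: Lpnorm_def)
qed

lemma Lpnorm_top_le_iff:
  assumes "f \<in> borel_measurable M" "0 \<le> c"
  shows "Lpnorm M \<infinity> f \<le> ennreal c \<longleftrightarrow> (AE \<omega> in M. \<bar>f \<omega>\<bar> \<le> c)"
proof
  assume a: "Lpnorm M \<infinity> f \<le> ennreal c"
  have "AE \<omega> in M. ennreal \<bar>f \<omega>\<bar> \<le> esssup M (\<lambda>\<omega>. ennreal \<bar>f \<omega>\<bar>)" by (rule esssup_AE)
  then show "AE \<omega> in M. \<bar>f \<omega>\<bar> \<le> c"
    using a assms unfolding Lpnorm_def by (auto elim!: eventually_mono) (metis ennreal_le_iff order_trans)
next
  assume "AE \<omega> in M. \<bar>f \<omega>\<bar> \<le> c"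
  then show "Lpnorm M \<infinity> f \<le> ennreal c" unfolding Lpnorm_def using assms
    by (auto intro!: esssup_I elim!: eventually_mono)
qed

lemma ennreal_exponent_cases:
  fixes p :: ennreal
  assumes "1 \<le> p"
  obtains "p = \<infinity>" | P where "p = ennreal P" "1 \<le> P"
proof (cases p rule: ennreal_cases)
  case (real P)
  then show ?thesis using assms that(2) by simp
qed (use that in simp)

lemma Lpnorm_le_AE_mono:
  assumes "1 \<le> p" "f \<in> borel_measurable M" "g \<in> borel_measurable M"
    and "AE \<omega> in M. \<bar>g \<omega>\<bar> \<le> \<bar>f \<omega>\<bar>" "Lpnorm M p f \<le> ennreal c" "0 \<le> c"
  shows "Lpnorm M p g \<le> ennreal c"
  using assms(1)
proof (cases rule: ennreal_exponent_cases)
  case 1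
  have "AE \<omega> in M. \<bar>f \<omega>\<bar> \<le> c" using assms 1 by (intro Lpnorm_top_le_iff[THEN iffD1]) auto
  with assms(4) have "AE \<omega> in M. \<bar>g \<omega>\<bar> \<le> c" by eventually_elim auto
  then show ?thesis using assms unfolding 1 by (intro Lpnorm_top_le_iff[THEN iffD2]) auto
next
  case (2 P)
  have "(\<integral>\<^sup>+\<omega>. ennreal (\<bar>g \<omega>\<bar> powr P) \<partial>M) \<le> (\<integral>\<^sup>+\<omega>. ennreal (\<bar>f \<omega>\<bar> powr P) \<partial>M)"
    using assms(4) 2 by (intro nn_integral_mono_AE) (auto elim!: eventually_mono intro: powr_mono2)
  then show ?thesis using assms 2 by (auto simp: Lpnorm_le_iff_nn_integral)
qed

text \<open>A triangle inequality with a crude constant is all the argument needs.\<close>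

lemma Lpnorm_add_le:
  assumes "1 \<le> p" "f \<in> borel_measurable M" "g \<in> borel_measurable M"
    and "Lpnorm M p f \<le> ennreal a" "Lpnorm M p g \<le> ennreal b" "0 \<le> a" "0 \<le> b"
  shows "Lpnorm M p (\<lambda>\<omega>. f \<omega> + g \<omega>) \<le> ennreal (4 * (a + b))"
  using assms(1)
proof (cases rule: ennreal_exponent_cases)
  case 1
  have "AE \<omega> in M. \<bar>f \<omega>\<bar> \<le> a" "AE \<omega> in M. \<bar>g \<omega>\<bar> \<le> b"
    using assms 1 by (intro Lpnorm_top_le_iff[THEN iffD1]; simp)+
  then have "AE \<omega> in M. \<bar>f \<omega> + g \<omega>\<bar> \<le> 4 * (a + b)" by eventually_elim (use assms in auto)
  then show ?thesis using assms unfolding 1 by (intro Lpnorm_top_le_iff[THEN iffD2]) auto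
next
  case (2 P)
  have pointwise: "\<bar>f \<omega> + g \<omega>\<bar> powr P \<le> 2 powr P * \<bar>f \<omega>\<bar> powr P + 2 powr P * \<bar>g \<omega>\<bar> powr P" for \<omega>
  proof -
    have "\<bar>f \<omega> + g \<omega>\<bar> powr P \<le> (2 * max \<bar>f \<omega>\<bar> \<bar>g \<omega>\<bar>) powr P"
      using 2 by (intro powr_mono2) auto
    also have "\<dots> = 2 powr P * max \<bar>f \<omega>\<bar> \<bar>g \<omega>\<bar> powr P" by (simp add: powr_mult)
    also have "max \<bar>f \<omega>\<bar> \<bar>g \<omega>\<bar> powr P \<le> \<bar>f \<omega>\<bar> powr P + \<bar>g \<omega>\<bar> powr P"
      by (cases "\<bar>f \<omega>\<bar> \<le> \<bar>g \<omega>\<bar>") (auto simp: max_def)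
    finally show ?thesis by (simp add: algebra_simps)
  qed
  have constants: "2 powr P * a powr P + 2 powr P * b powr P \<le> (4 * (a + b)) powr P"
  proof -
    have "a powr P \<le> (a + b) powr P" "b powr P \<le> (a + b) powr P"
      using assms 2 by (auto intro: powr_mono2)
    then have "2 powr P * a powr P \<le> 2 powr P * (a + b) powr P"
        "2 powr P * b powr P \<le> 2 powr P * (a + b) powr P"
      by (simp_all add: mult_left_mono)
    then have "2 powr P * a powr P + 2 powr P * b powr P \<le> 2 * 2 powr P * (a + b) powr P"
      by linarith
    also have "\<dots> \<le> 2 powr P * 2 powr P * (a + b) powr P"
      using 2 powr_mono[of 1 P 2] by (intro mult_right_mono) auto
    also have "\<dots> = (4 * (a + b)) powr P" by (simp add: powr_mult[symmetric])
    finally show ?thesis .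
  qed
  have "(\<integral>\<^sup>+\<omega>. ennreal (\<bar>f \<omega> + g \<omega>\<bar> powr P) \<partial>M)
      \<le> (\<integral>\<^sup>+\<omega>. ennreal (2 powr P) * ennreal (\<bar>f \<omega>\<bar> powr P) + ennreal (2 powr P) * ennreal (\<bar>g \<omega>\<bar> powr P) \<partial>M)"
    using pointwise by (intro nn_integral_mono)
      (simp add: ennreal_mult[symmetric] ennreal_plus[symmetric] del: ennreal_plus)
  also have "\<dots> = ennreal (2 powr P) * (\<integral>\<^sup>+\<omega>. ennreal (\<bar>f \<omega>\<bar> powr P) \<partial>M)
      + ennreal (2 powr P) * (\<integral>\<^sup>+\<omega>. ennreal (\<bar>g \<omega>\<bar> powr P) \<partial>M)"
    using assms by (simp add: nn_integral_add nn_integral_cmult)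
  also have "\<dots> \<le> ennreal (2 powr P) * ennreal (a powr P) + ennreal (2 powr P) * ennreal (b powr P)"
    using assms 2 by (intro add_mono mult_left_mono) (auto simp: Lpnorm_le_iff_nn_integral)
  also have "\<dots> \<le> ennreal ((4 * (a + b)) powr P)"
    using constants by (simp add: ennreal_mult[symmetric] ennreal_plus[symmetric] del: ennreal_plus)
  finally show ?thesis unfolding 2 using assms 2 by (subst Lpnorm_le_iff_nn_integral) auto
qed

lemma Lpnorm_scale_le:
  assumes "1 \<le> p" "f \<in> borel_measurable M" "Lpnorm M p f \<le> ennreal a" "0 \<le> a"
  shows "Lpnorm M p (\<lambda>\<omega>. c * f \<omega>) \<le> ennreal (\<bar>c\<bar> * a)"
  using assms(1)
proof (cases rule: ennreal_exponent_cases)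
  case 1
  have "AE \<omega> in M. \<bar>f \<omega>\<bar> \<le> a" using assms 1 by (intro Lpnorm_top_le_iff[THEN iffD1]) auto
  then have "AE \<omega> in M. \<bar>c * f \<omega>\<bar> \<le> \<bar>c\<bar> * a"
    by eventually_elim (auto simp: abs_mult intro: mult_left_mono)
  then show ?thesis using assms unfolding 1 by (intro Lpnorm_top_le_iff[THEN iffD2]) auto
next
  case (2 P)
  have "(\<integral>\<^sup>+\<omega>. ennreal (\<bar>c * f \<omega>\<bar> powr P) \<partial>M)
      = ennreal (\<bar>c\<bar> powr P) * (\<integral>\<^sup>+\<omega>. ennreal (\<bar>f \<omega>\<bar> powr P) \<partial>M)"
    using assms by (simp add: abs_mult powr_mult ennreal_mult nn_integral_cmult)
  also have "\<dots> \<le> ennreal (\<bar>c\<bar> powr P) * ennreal (a powr P)"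
    using assms 2 by (intro mult_left_mono) (auto simp: Lpnorm_le_iff_nn_integral)
  also have "\<dots> = ennreal ((\<bar>c\<bar> * a) powr P)" by (simp add: powr_mult ennreal_mult)
  finally show ?thesis using assms 2 by (simp add: Lpnorm_le_iff_nn_integral)
qed

lemma AE_zero_if_Lpnorm_arbitrarily_small:
  assumes "1 \<le> p" "f \<in> borel_measurable M" "\<And>e. 0 < e \<Longrightarrow> Lpnorm M p f \<le> ennreal e"
  shows "AE \<omega> in M. f \<omega> = 0"
proof -
  have "Lpnorm M p f \<le> 0 + ennreal 0"
    by (rule ennreal_le_epsilon) (use assms in auto)
  then have zero: "Lpnorm M p f \<le> ennreal 0" by simp
  from assms(1) show ?thesis
  proof (cases rule: ennreal_exponent_cases)
    case 1
    then have "AE \<omega> in M. \<bar>f \<omega>\<bar> \<le> 0" using zero assms by (intro Lpnorm_top_le_iff[THEN iffD1]) auto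
    then show ?thesis by (auto elim!: eventually_mono)
  next
    case (2 P)
    then have "(\<integral>\<^sup>+\<omega>. ennreal (\<bar>f \<omega>\<bar> powr P) \<partial>M) = 0"
      using zero Lpnorm_le_iff_nn_integral[of P 0 M f] by simp
    then have "AE \<omega> in M. ennreal (\<bar>f \<omega>\<bar> powr P) = 0"
      using assms by (simp add: nn_integral_0_iff_AE)
    then show ?thesis by (auto elim!: eventually_mono)
  qed
qed

lemma exists_powr_mult_le:
  fixes a c K :: real
  assumes "a \<noteq> 0" "0 < c" "0 \<le> K"
  shows "\<exists>s>0. s powr a * K \<le> c"
proof (intro exI conjI)
  define s where "s = (c / (K + 1)) powr (1 / a)"
  show "0 < s" using assms by (simp add: s_def)
  have "s powr a * K = c / (K + 1) * K" using assms by (simp add: s_def powr_powr)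
  also have "\<dots> \<le> c / (K + 1) * (K + 1)" using assms by (intro mult_left_mono) auto
  finally show "s powr a * K \<le> c" using assms by simp
qed

lemma powr_le_interpolate:
  fixes x s a b P :: real
  assumes "0 < s" "min a b < P" "P < max a b" "0 \<le> x"
  shows "x powr P \<le> s powr (P - a) * x powr a + s powr (P - b) * x powr b"
proof -
  have ordered: "x powr P \<le> s powr (P - lo) * x powr lo + s powr (P - hi) * x powr hi"
    if "lo < P" "P < hi" for lo hi
  proof (cases "x \<le> s")
    case True
    have "x powr P = x powr lo * x powr (P - lo)" by (simp add: powr_add[symmetric])
    also have "\<dots> \<le> x powr lo * s powr (P - lo)"
      using True assms that by (intro mult_left_mono powr_mono2) auto
    finally show ?thesis by (simp add: mult.commute add_increasing2)
  next
    case False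
    have "x powr P = x powr hi * x powr (P - hi)" by (simp add: powr_add[symmetric])
    also have "\<dots> \<le> x powr hi * s powr (P - hi)"
      using False assms that by (intro mult_left_mono powr_mono2') auto
    finally show ?thesis by (simp add: mult.commute add_increasing)
  qed
  show ?thesis
  proof (cases "a \<le> b")
    case True
    then show ?thesis using assms ordered[of a b] by simp
  next
    case False
    then show ?thesis using assms ordered[of b a] by (simp add: add.commute)
  qed
qed

lemma nn_integral_powr_le_Linf:
  assumes "f \<in> borel_measurable M" "AE \<omega> in M. \<bar>f \<omega>\<bar> \<le> A" "R \<le> P"
  shows "(\<integral>\<^sup>+\<omega>. ennreal (\<bar>f \<omega>\<bar> powr P) \<partial>M)
    \<le> ennreal (A powr (P - R)) * (\<integral>\<^sup>+\<omega>. ennreal (\<bar>f \<omega>\<bar> powr R) \<partial>M)"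
proof -
  have "(\<integral>\<^sup>+\<omega>. ennreal (\<bar>f \<omega>\<bar> powr P) \<partial>M)
      \<le> (\<integral>\<^sup>+\<omega>. ennreal (A powr (P - R)) * ennreal (\<bar>f \<omega>\<bar> powr R) \<partial>M)"
    using assms(2)
  proof (intro nn_integral_mono_AE, eventually_elim)
    case (elim \<omega>)
    have "\<bar>f \<omega>\<bar> powr P = \<bar>f \<omega>\<bar> powr R * \<bar>f \<omega>\<bar> powr (P - R)" by (simp add: powr_add[symmetric])
    also have "\<dots> \<le> \<bar>f \<omega>\<bar> powr R * A powr (P - R)"
      using elim assms by (intro mult_left_mono powr_mono2) auto
    finally show ?case by (simp add: ennreal_mult[symmetric] mult.commute)
  qed
  also have "\<dots> = ennreal (A powr (P - R)) * (\<integral>\<^sup>+\<omega>. ennreal (\<bar>f \<omega>\<bar> powr R) \<partial>M)"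
    using assms by (simp add: nn_integral_cmult)
  finally show ?thesis .
qed

lemma nn_integral_powr_le_interpolate:
  assumes "f \<in> borel_measurable M" "0 < s" "min Q R < P" "P < max Q R"
  shows "(\<integral>\<^sup>+\<omega>. ennreal (\<bar>f \<omega>\<bar> powr P) \<partial>M)
    \<le> ennreal (s powr (P - Q)) * (\<integral>\<^sup>+\<omega>. ennreal (\<bar>f \<omega>\<bar> powr Q) \<partial>M)
      + ennreal (s powr (P - R)) * (\<integral>\<^sup>+\<omega>. ennreal (\<bar>f \<omega>\<bar> powr R) \<partial>M)"
proof -
  have "(\<integral>\<^sup>+\<omega>. ennreal (\<bar>f \<omega>\<bar> powr P) \<partial>M)
      \<le> (\<integral>\<^sup>+\<omega>. ennreal (s powr (P - Q)) * ennreal (\<bar>f \<omega>\<bar> powr Q)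
                + ennreal (s powr (P - R)) * ennreal (\<bar>f \<omega>\<bar> powr R) \<partial>M)"
    using powr_le_interpolate[OF assms(2-4)] by (intro nn_integral_mono)
      (simp add: ennreal_mult[symmetric] ennreal_plus[symmetric] del: ennreal_plus)
  also have "\<dots> = ennreal (s powr (P - Q)) * (\<integral>\<^sup>+\<omega>. ennreal (\<bar>f \<omega>\<bar> powr Q) \<partial>M)
      + ennreal (s powr (P - R)) * (\<integral>\<^sup>+\<omega>. ennreal (\<bar>f \<omega>\<bar> powr R) \<partial>M)"
    using assms by (simp add: nn_integral_add nn_integral_cmult)
  finally show ?thesis .
qed

lemma Lpnorm_small_by_interpolation:
  assumes q: "1 \<le> q" and r: "1 \<le> r" and p: "min q r < p" "p < max q r"
    and K: "0 \<le> K" and e: "0 < e"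
  shows "\<exists>\<delta>>0. \<forall>f \<in> borel_measurable M. Lpnorm M r f \<le> ennreal K \<longrightarrow>
            Lpnorm M q f \<le> ennreal \<delta> \<longrightarrow> Lpnorm M p f \<le> ennreal e"
proof -
  have "1 \<le> p" "p \<noteq> \<infinity>" using p q r by (auto simp: max_def min_def split: if_splits)
  then obtain P where pP: "p = ennreal P" and P: "1 \<le> P"
    by (cases rule: ennreal_exponent_cases) auto
  have goal: "Lpnorm M p f \<le> ennreal e \<longleftrightarrow> (\<integral>\<^sup>+\<omega>. ennreal (\<bar>f \<omega>\<bar> powr P) \<partial>M) \<le> ennreal (e powr P)"
    for f using P e by (simp add: pP Lpnorm_le_iff_nn_integral)
  have ePpos: "0 < e powr P" using e by simp
  from q show ?thesis
  proof (cases rule: ennreal_exponent_cases)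
    case q_inf: 1
    have "r \<noteq> \<infinity>" using p q_inf by (auto simp: min_def max_def split: if_splits)
    with r obtain R where rR: "r = ennreal R" and R: "1 \<le> R"
      by (cases rule: ennreal_exponent_cases) auto
    have RP: "R < P" using p pP q_inf rR R by (auto simp: min_def max_def ennreal_less_iff split: if_splits)
    obtain \<delta> where \<delta>: "0 < \<delta>" "\<delta> powr (P - R) * K powr R \<le> e powr P"
      using exists_powr_mult_le[of "P - R" "e powr P" "K powr R"] RP ePpos by auto
    have "(\<integral>\<^sup>+\<omega>. ennreal (\<bar>f \<omega>\<bar> powr P) \<partial>M) \<le> ennreal (e powr P)"
      if f: "f \<in> borel_measurable M" "Lpnorm M r f \<le> ennreal K" "Lpnorm M q f \<le> ennreal \<delta>" for f
    proof -
      have "AE \<omega> in M. \<bar>f \<omega>\<bar> \<le> \<delta>"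
        using f \<delta> unfolding q_inf by (intro Lpnorm_top_le_iff[THEN iffD1]) auto
      then have "(\<integral>\<^sup>+\<omega>. ennreal (\<bar>f \<omega>\<bar> powr P) \<partial>M)
          \<le> ennreal (\<delta> powr (P - R)) * (\<integral>\<^sup>+\<omega>. ennreal (\<bar>f \<omega>\<bar> powr R) \<partial>M)"
        using f RP by (intro nn_integral_powr_le_Linf) auto
      also have "\<dots> \<le> ennreal (\<delta> powr (P - R)) * ennreal (K powr R)"
        using f R K by (intro mult_left_mono) (auto simp: rR Lpnorm_le_iff_nn_integral)
      also have "\<dots> \<le> ennreal (e powr P)" using \<delta> by (simp add: ennreal_mult[symmetric])
      finally show ?thesis .
    qed
    then show ?thesis using \<delta> goal by blast
  next
    case (2 Q)
    note qQ = 2(1) and Q = 2(2)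
    from r show ?thesis
    proof (cases rule: ennreal_exponent_cases)
      case r_inf: 1
      then have QP: "Q < P" using p pP qQ Q by (auto simp: min_def max_def ennreal_less_iff split: if_splits)
      obtain \<delta> where \<delta>: "0 < \<delta>" "\<delta> powr Q * K powr (P - Q) \<le> e powr P"
        using exists_powr_mult_le[of Q "e powr P" "K powr (P - Q)"] Q ePpos by auto
      have "(\<integral>\<^sup>+\<omega>. ennreal (\<bar>f \<omega>\<bar> powr P) \<partial>M) \<le> ennreal (e powr P)"
        if f: "f \<in> borel_measurable M" "Lpnorm M r f \<le> ennreal K" "Lpnorm M q f \<le> ennreal \<delta>" for f
      proof -
        have "AE \<omega> in M. \<bar>f \<omega>\<bar> \<le> K"
          using f K unfolding r_inf by (intro Lpnorm_top_le_iff[THEN iffD1]) auto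
        then have "(\<integral>\<^sup>+\<omega>. ennreal (\<bar>f \<omega>\<bar> powr P) \<partial>M)
            \<le> ennreal (K powr (P - Q)) * (\<integral>\<^sup>+\<omega>. ennreal (\<bar>f \<omega>\<bar> powr Q) \<partial>M)"
          using f QP by (intro nn_integral_powr_le_Linf) auto
        also have "\<dots> \<le> ennreal (K powr (P - Q)) * ennreal (\<delta> powr Q)"
          using f Q \<delta> by (intro mult_left_mono) (auto simp: qQ Lpnorm_le_iff_nn_integral)
        also have "\<dots> \<le> ennreal (e powr P)" using \<delta> by (simp add: ennreal_mult[symmetric] mult.commute)
        finally show ?thesis .
      qed
      then show ?thesis using \<delta> goal by blast
    next
      case (2 R)
      note rR = 2(1) and R = 2(2)
      have QRP: "min Q R < P" "P < max Q R"
        using p pP qQ rR Q R P by (auto simp: min_def max_def ennreal_less_iff split: if_splits)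
      obtain s where s: "0 < s" "s powr (P - R) * K powr R \<le> e powr P / 2"
        using exists_powr_mult_le[of "P - R" "e powr P / 2" "K powr R"] QRP ePpos by fastforce
      obtain \<delta> where \<delta>: "0 < \<delta>" "\<delta> powr Q * s powr (P - Q) \<le> e powr P / 2"
        using exists_powr_mult_le[of Q "e powr P / 2" "s powr (P - Q)"] Q ePpos by auto
      have "(\<integral>\<^sup>+\<omega>. ennreal (\<bar>f \<omega>\<bar> powr P) \<partial>M) \<le> ennreal (e powr P)"
        if f: "f \<in> borel_measurable M" "Lpnorm M r f \<le> ennreal K" "Lpnorm M q f \<le> ennreal \<delta>" for f
      proof -
        have "(\<integral>\<^sup>+\<omega>. ennreal (\<bar>f \<omega>\<bar> powr P) \<partial>M)
            \<le> ennreal (s powr (P - Q)) * (\<integral>\<^sup>+\<omega>. ennreal (\<bar>f \<omega>\<bar> powr Q) \<partial>M)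
              + ennreal (s powr (P - R)) * (\<integral>\<^sup>+\<omega>. ennreal (\<bar>f \<omega>\<bar> powr R) \<partial>M)"
          using f s QRP by (intro nn_integral_powr_le_interpolate)
        also have "\<dots> \<le> ennreal (s powr (P - Q)) * ennreal (\<delta> powr Q)
              + ennreal (s powr (P - R)) * ennreal (K powr R)"
          using f Q R K \<delta> by (intro add_mono mult_left_mono)
            (auto simp: qQ rR Lpnorm_le_iff_nn_integral)
        also have "\<dots> \<le> ennreal (e powr P)"
          using s \<delta> by (simp add: ennreal_mult[symmetric] ennreal_plus[symmetric] mult.commute
              del: ennreal_plus)
        finally show ?thesis .
      qed
      then show ?thesis using \<delta> goal by blast
    qed
  qed
qed

lemma exists_dyadic_bracket:
  fixes t :: real
  assumes "0 < t" "t < 1"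
  shows "\<exists>m. (1/2) ^ Suc m \<le> t \<and> t < (1/2) ^ m"
proof -
  define P where "P k \<longleftrightarrow> (1/2::real) ^ Suc k \<le> t" for k
  obtain n where "(1/2::real) ^ n < t" using real_arch_pow_inv[of t "1/2"] assms by auto
  moreover have "(1/2::real) ^ Suc n \<le> (1/2) ^ n" by simp
  ultimately have "P n" unfolding P_def by linarith
  define m where "m = (LEAST k. P k)"
  have "P m" unfolding m_def by (rule LeastI[of P n, OF \<open>P n\<close>])
  moreover have "t < (1/2) ^ m"
  proof (cases m)
    case (Suc k)
    then have "\<not> P k" using not_less_Least[of k P] m_def by simp
    then show ?thesis using Suc by (simp add: P_def)
  qed (use assms in simp)
  ultimately show ?thesis unfolding P_def by blast
qed

lemma ennreal_tendsto_0I: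
  assumes "\<And>e. 0 < e \<Longrightarrow> eventually (\<lambda>x. f x \<le> ennreal e) F"
  shows "(f \<longlongrightarrow> (0::ennreal)) F"
proof (rule order_tendstoI)
  fix a :: ennreal assume "0 < a"
  then obtain b :: ennreal where b: "0 < b" "b < a" using dense by blast
  moreover have "b < top" using b(2) top_greatest by (rule order_less_le_trans)
  ultimately have "0 < enn2real b" "ennreal (enn2real b) = b"
    by (auto simp: enn2real_positive_iff)
  then show "eventually (\<lambda>x. f x < a) F"
    using assms[of "enn2real b"] b by (auto elim!: eventually_mono)
qed simp

section \<open>Separating a point from a closed convex cone\<close>

definition dominated_linear_graph :: "('y::real_vector \<Rightarrow> real) \<Rightarrow> ('y \<times> real) set \<Rightarrow> bool" where
  "dominated_linear_graph p G \<longleftrightarrow>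
     (0, 0) \<in> G \<and>
     (\<forall>a b a' b'. (a, b) \<in> G \<longrightarrow> (a', b') \<in> G \<longrightarrow> (a + a', b + b') \<in> G) \<and>
     (\<forall>a b t. (a, b) \<in> G \<longrightarrow> (t *\<^sub>R a, t * b) \<in> G) \<and>
     (\<forall>b. (0, b) \<in> G \<longrightarrow> b = 0) \<and>
     (\<forall>a b. (a, b) \<in> G \<longrightarrow> b \<le> p a)"

lemma dominated_linear_graph_Union_chain:
  assumes "C \<noteq> {}" "chain\<^sub>\<subseteq> C" and dom: "\<And>G. G \<in> C \<Longrightarrow> dominated_linear_graph p G"
  shows "dominated_linear_graph p (\<Union>C)"
  unfolding dominated_linear_graph_def
proof (intro conjI allI impI)
  obtain G where "G \<in> C" using assms(1) by blast
  then show "(0, 0) \<in> \<Union>C" using dom[of G] unfolding dominated_linear_graph_def by blast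
next
  fix a b a' b'
  assume "(a, b) \<in> \<Union>C" "(a', b') \<in> \<Union>C"
  then obtain G G' where GG': "G \<in> C" "G' \<in> C" "(a, b) \<in> G" "(a', b') \<in> G'" by auto
  then consider "G \<subseteq> G'" | "G' \<subseteq> G" using assms(2) by (auto simp: chain_subset_def)
  then show "(a + a', b + b') \<in> \<Union>C"
  proof cases
    case 1
    then show ?thesis using GG' dom[of G'] unfolding dominated_linear_graph_def by blast
  next
    case 2
    then show ?thesis using GG' dom[of G] unfolding dominated_linear_graph_def by blast
  qed
next
  fix a b t assume "(a, b) \<in> \<Union>C"
  then obtain G where "G \<in> C" "(a, b) \<in> G" by auto
  then show "(t *\<^sub>R a, t * b) \<in> \<Union>C" using dom[of G] unfolding dominated_linear_graph_def by blast
next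
  fix b assume "(0, b) \<in> \<Union>C"
  then obtain G where "G \<in> C" "(0, b) \<in> G" by auto
  then show "b = 0" using dom[of G] unfolding dominated_linear_graph_def by blast
next
  fix a b assume "(a, b) \<in> \<Union>C"
  then obtain G where "G \<in> C" "(a, b) \<in> G" by auto
  then show "b \<le> p a" using dom[of G] unfolding dominated_linear_graph_def by blast
qed

lemma dominated_linear_graph_unique:
  assumes "dominated_linear_graph p G" "(a, b) \<in> G" "(a, b') \<in> G"
  shows "b = b'"
proof -
  have "(a + (-1) *\<^sub>R a, b + (-1) * b') \<in> G"
    using assms unfolding dominated_linear_graph_def by blast
  then show ?thesis using assms(1) unfolding dominated_linear_graph_def by force
qed

text \<open>The one-step Hahn--Banach extension: the slope \<open>c\<close> along \<open>v\<close> is chosen between the two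
  bounds of \<open>gap\<close>.\<close>

lemma dominated_linear_graph_extend:
  assumes sub: "\<And>a b. p (a + b) \<le> p a + p b"
    and hom: "\<And>t a. 0 < t \<Longrightarrow> p (t *\<^sub>R a) = t * p a"
    and G: "dominated_linear_graph p G" and v: "\<And>b. (v, b) \<notin> G"
  shows "\<exists>G'. dominated_linear_graph p G' \<and> G \<subseteq> G' \<and> (\<exists>c. (v, c) \<in> G')"
proof -
  have G0: "(0, 0) \<in> G"
    and Gadd: "\<And>a b a' b'. (a, b) \<in> G \<Longrightarrow> (a', b') \<in> G \<Longrightarrow> (a + a', b + b') \<in> G"
    and Gscale: "\<And>a b t. (a, b) \<in> G \<Longrightarrow> (t *\<^sub>R a, t * b) \<in> G"
    and Gfun: "\<And>b. (0, b) \<in> G \<Longrightarrow> b = 0"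
    and Gdom: "\<And>a b. (a, b) \<in> G \<Longrightarrow> b \<le> p a"
    using G unfolding dominated_linear_graph_def by blast+
  define L where "L = {b - p (a - v) | a b. (a, b) \<in> G}"
  have gap: "b - p (a - v) \<le> p (a' + v) - b'" if "(a, b) \<in> G" "(a', b') \<in> G" for a b a' b'
  proof -
    have "b + b' \<le> p (a + a')" using Gdom[OF Gadd[OF that]] .
    also have "\<dots> \<le> p (a - v) + p (a' + v)" using sub[of "a - v" "a' + v"] by simp
    finally show ?thesis by simp
  qed
  have "bdd_above L" unfolding L_def bdd_above_def using gap[OF _ G0] by auto
  define c where "c = Sup L"
  have c_lower: "b - p (a - v) \<le> c" if "(a, b) \<in> G" for a b
    unfolding c_def by (rule cSup_upper) (use that \<open>bdd_above L\<close> L_def in auto)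
  have c_upper: "c \<le> p (a + v) - b" if "(a, b) \<in> G" for a b
    unfolding c_def by (rule cSup_least) (use G0 L_def gap that in auto)
  define G' where "G' = {(a + t *\<^sub>R v, b + t * c) | a b t. (a, b) \<in> G}"
  have G'I: "(a + t *\<^sub>R v, b + t * c) \<in> G'" if "(a, b) \<in> G" for a b t
    unfolding G'_def using that by blast
  have "dominated_linear_graph p G'"
    unfolding dominated_linear_graph_def
  proof (intro conjI allI impI)
    show "(0, 0) \<in> G'" using G'I[OF G0, of 0] by simp
  next
    fix a b a' b' assume "(a, b) \<in> G'" "(a', b') \<in> G'"
    then obtain a1 b1 t1 a2 b2 t2 where "(a1, b1) \<in> G" "(a2, b2) \<in> G"
      "a = a1 + t1 *\<^sub>R v" "b = b1 + t1 * c" "a' = a2 + t2 *\<^sub>R v" "b' = b2 + t2 * c"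
      unfolding G'_def by blast
    then show "(a + a', b + b') \<in> G'"
      using G'I[OF Gadd, of a1 b1 a2 b2 "t1 + t2"] by (simp add: algebra_simps)
  next
    fix a b t assume "(a, b) \<in> G'"
    then obtain a1 b1 t1 where "(a1, b1) \<in> G" "a = a1 + t1 *\<^sub>R v" "b = b1 + t1 * c"
      unfolding G'_def by blast
    then show "(t *\<^sub>R a, t * b) \<in> G'"
      using G'I[OF Gscale, of a1 b1 t "t * t1"] by (simp add: algebra_simps)
  next
    fix b assume "(0, b) \<in> G'"
    then obtain a1 b1 t where h: "(a1, b1) \<in> G" "0 = a1 + t *\<^sub>R v" "b = b1 + t * c"
      unfolding G'_def by blast
    show "b = 0"
    proof (cases "t = 0")
      case True
      then show ?thesis using h Gfun by auto
    next
      case False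
      have "t *\<^sub>R v = - a1" using h(2) by (simp add: eq_neg_iff_add_eq_0 add.commute)
      then have "inverse t *\<^sub>R (t *\<^sub>R v) = inverse t *\<^sub>R (- a1)" by simp
      then have "v = (- 1 / t) *\<^sub>R a1" using False by (simp add: divide_inverse)
      then show ?thesis using Gscale[OF h(1), of "- 1 / t"] v by metis
    qed
  next
    fix a b assume "(a, b) \<in> G'"
    then obtain a1 b1 t where h: "(a1, b1) \<in> G" "a = a1 + t *\<^sub>R v" "b = b1 + t * c"
      unfolding G'_def by blast
    show "b \<le> p a"
    proof (cases t "0::real" rule: linorder_cases)
      case equal
      then show ?thesis using h Gdom by auto
    next
      case greater
      from c_upper[OF Gscale[OF h(1), of "inverse t"]]
      have "t * c \<le> t * (p (inverse t *\<^sub>R a1 + v) - inverse t * b1)"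
        using greater by (intro mult_left_mono) auto
      also have "\<dots> = p (t *\<^sub>R (inverse t *\<^sub>R a1 + v)) - b1"
        using greater hom[OF greater] by (simp add: right_diff_distrib)
      also have "t *\<^sub>R (inverse t *\<^sub>R a1 + v) = a" using greater h by (simp add: algebra_simps)
      finally show ?thesis using h by simp
    next
      case less
      define s where "s = - t"
      have s: "0 < s" using less s_def by simp
      from c_lower[OF Gscale[OF h(1), of "inverse s"]]
      have "s * (inverse s * b1 - p (inverse s *\<^sub>R a1 - v)) \<le> s * c"
        using s by (intro mult_left_mono) auto
      then have "b1 - s * c \<le> s * p (inverse s *\<^sub>R a1 - v)" using s by (simp add: algebra_simps)
      also have "\<dots> = p (s *\<^sub>R (inverse s *\<^sub>R a1 - v))" using hom[OF s] by simp
      also have "s *\<^sub>R (inverse s *\<^sub>R a1 - v) = a" using s h s_def by (simp add: algebra_simps)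
      finally show ?thesis using h s_def by simp
    qed
  qed
  moreover have "G \<subseteq> G'" using G'I[of _ _ 0] by auto
  moreover have "(v, c) \<in> G'" using G'I[OF G0, of 1] by simp
  ultimately show ?thesis by blast
qed

lemma sublinear_Hahn_Banach:
  fixes p :: "'y::real_vector \<Rightarrow> real"
  assumes sub: "\<And>a b. p (a + b) \<le> p a + p b"
    and hom: "\<And>t a. 0 < t \<Longrightarrow> p (t *\<^sub>R a) = t * p a"
    and u: "\<And>t. t * p u \<le> p (t *\<^sub>R u)"
  shows "\<exists>f. linear f \<and> (\<forall>a. f a \<le> p a) \<and> f u = p u"
proof -
  define A where "A = {G. dominated_linear_graph p G \<and> (u, p u) \<in> G}"
  have p0: "p 0 = 0" using hom[of 2 0] by simp
  define L where "L = range (\<lambda>t. (t *\<^sub>R u, t * p u))"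
  have "L \<in> A"
    unfolding A_def dominated_linear_graph_def
  proof (intro CollectI conjI allI impI)
    show "(0, 0) \<in> L" "(u, p u) \<in> L" unfolding L_def by (auto intro: range_eqI[of _ _ 0] range_eqI[of _ _ 1])
  next
    fix a b a' b' assume "(a, b) \<in> L" "(a', b') \<in> L"
    then obtain s s' where "a = s *\<^sub>R u" "b = s * p u" "a' = s' *\<^sub>R u" "b' = s' * p u"
      unfolding L_def by auto
    then have "(a + a', b + b') = (\<lambda>t. (t *\<^sub>R u, t * p u)) (s + s')" by (simp add: algebra_simps)
    then show "(a + a', b + b') \<in> L" unfolding L_def by (rule range_eqI)
  next
    fix a b t assume "(a, b) \<in> L"
    then obtain s where "a = s *\<^sub>R u" "b = s * p u" unfolding L_def by auto
    then have "(t *\<^sub>R a, t * b) = (\<lambda>t. (t *\<^sub>R u, t * p u)) (t * s)" by simp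
    then show "(t *\<^sub>R a, t * b) \<in> L" unfolding L_def by (rule range_eqI)
  next
    fix b assume "(0, b) \<in> L"
    then show "b = 0" using p0 unfolding L_def by auto
  next
    fix a b assume "(a, b) \<in> L"
    then show "b \<le> p a" using u unfolding L_def by auto
  qed
  then have "\<exists>G\<in>A. \<forall>H\<in>A. G \<subseteq> H \<longrightarrow> H = G"
  proof (intro Zorn_Lemma2 ballI)
    fix C assume "C \<in> chains A"
    then have "C \<subseteq> A" "chain\<^sub>\<subseteq> C" by (auto simp: chains_def)
    show "\<exists>U\<in>A. \<forall>G\<in>C. G \<subseteq> U"
    proof (cases "C = {}")
      case False
      then have "\<Union>C \<in> A" using \<open>C \<subseteq> A\<close> \<open>chain\<^sub>\<subseteq> C\<close> unfolding A_def
        by (auto intro!: dominated_linear_graph_Union_chain)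
      then show ?thesis by blast
    qed (use \<open>L \<in> A\<close> in blast)
  qed
  then obtain G where G: "dominated_linear_graph p G" "(u, p u) \<in> G"
    and maximal: "\<And>H. dominated_linear_graph p H \<Longrightarrow> G \<subseteq> H \<Longrightarrow> H = G"
    unfolding A_def by blast
  have total: "\<exists>b. (y, b) \<in> G" for y
    using dominated_linear_graph_extend[OF sub hom G(1), of y] maximal by blast
  define f where "f y = (SOME b. (y, b) \<in> G)" for y
  have f_graph: "(y, f y) \<in> G" for y unfolding f_def using total[of y] by (rule someI_ex)
  have f_eq: "f y = b" if "(y, b) \<in> G" for y b
    using dominated_linear_graph_unique[OF G(1) f_graph that] .
  have "linear f"
    by (rule linearI; rule f_eq) (use G(1) f_graph in \<open>auto simp: dominated_linear_graph_def\<close>)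
  moreover have "f a \<le> p a" for a using G(1) f_graph unfolding dominated_linear_graph_def by blast
  ultimately show ?thesis using f_eq[OF G(2)] by blast
qed

lemma infdist_add_le:
  fixes a b :: "'a::real_normed_vector"
  assumes "C \<noteq> {}" "\<And>a b. a \<in> C \<Longrightarrow> b \<in> C \<Longrightarrow> a + b \<in> C"
  shows "infdist (a + b) C \<le> infdist a C + infdist b C"
proof -
  have "infdist (a + b) C - dist b c' \<le> dist a c" if "c \<in> C" "c' \<in> C" for c c'
  proof -
    have "infdist (a + b) C \<le> dist (a + b) (c + c')" using assms(2)[OF that] by (rule infdist_le)
    also have "\<dots> \<le> dist a c + dist b c'"
      unfolding dist_norm using norm_triangle_ineq[of "a - c" "b - c'"] by (simp add: algebra_simps)
    finally show ?thesis by simp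
  qed
  then have "infdist (a + b) C - dist b c' \<le> infdist a C" if "c' \<in> C" for c'
    unfolding infdist_notempty[OF assms(1), of a] using that by (intro cINF_greatest[OF assms(1)]) auto
  then have "infdist (a + b) C - infdist a C \<le> infdist b C"
    unfolding infdist_notempty[OF assms(1), of b] by (intro cINF_greatest[OF assms(1)]) force
  then show ?thesis by simp
qed

lemma infdist_scaleR_le:
  fixes a :: "'a::real_normed_vector"
  assumes "C \<noteq> {}" "\<And>a. a \<in> C \<Longrightarrow> t *\<^sub>R a \<in> C" "0 < t"
  shows "infdist (t *\<^sub>R a) C \<le> t * infdist a C"
proof -
  have "infdist (t *\<^sub>R a) C / t \<le> dist a c" if "c \<in> C" for c
  proof -
    have "infdist (t *\<^sub>R a) C \<le> dist (t *\<^sub>R a) (t *\<^sub>R c)" using assms(2)[OF that] by (rule infdist_le)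
    also have "\<dots> = t * dist a c" using assms(3) by (simp add: dist_norm scaleR_diff_right[symmetric])
    finally show ?thesis using assms(3) by (simp add: divide_le_eq mult.commute)
  qed
  then have "infdist (t *\<^sub>R a) C / t \<le> infdist a C"
    unfolding infdist_notempty[OF assms(1), of a] by (intro cINF_greatest[OF assms(1)]) simp
  then show ?thesis using assms(3) by (simp add: divide_le_eq mult.commute)
qed

text \<open>Hahn--Banach applied to the sublinear functional \<open>infdist \<cdot> C\<close>.\<close>

lemma separate_point_closed_convex_cone:
  fixes C :: "'y::real_normed_vector set"
  assumes "closed C" "0 \<in> C" and add: "\<And>a b. a \<in> C \<Longrightarrow> b \<in> C \<Longrightarrow> a + b \<in> C"
    and scale: "\<And>a t. a \<in> C \<Longrightarrow> 0 \<le> t \<Longrightarrow> t *\<^sub>R a \<in> C" and "u \<notin> C"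
  shows "\<exists>f::'y \<Rightarrow>\<^sub>L real. 0 < f u \<and> (\<forall>c\<in>C. f c \<le> 0)"
proof -
  define p where "p y = infdist y C" for y
  have C: "C \<noteq> {}" using assms by auto
  have homogeneous: "p (t *\<^sub>R a) = t * p a" if t: "0 < t" for t a
  proof (rule antisym)
    show "p (t *\<^sub>R a) \<le> t * p a" unfolding p_def using scale t by (intro infdist_scaleR_le[OF C]) auto
    have "p a = p (inverse t *\<^sub>R (t *\<^sub>R a))" using t by simp
    also have "\<dots> \<le> inverse t * p (t *\<^sub>R a)" unfolding p_def using scale t by (intro infdist_scaleR_le[OF C]) auto
    finally show "t * p a \<le> p (t *\<^sub>R a)" using t by (simp add: field_simps)
  qed
  have at_u: "t * p u \<le> p (t *\<^sub>R u)" for t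
  proof (cases t "0::real" rule: linorder_cases)
    case less
    then have "t * p u \<le> 0" unfolding p_def by (simp add: mult_nonpos_nonneg infdist_nonneg)
    then show ?thesis unfolding p_def by (meson infdist_nonneg order_trans)
  qed (use homogeneous \<open>0 \<in> C\<close> in \<open>auto simp: p_def\<close>)
  obtain f where f: "linear f" "\<And>a. f a \<le> p a" "f u = p u"
    using sublinear_Hahn_Banach[of p u] infdist_add_le[OF C add] homogeneous at_u
    unfolding p_def by blast
  have p_le_norm: "p a \<le> norm a" for a unfolding p_def using infdist_le[OF \<open>0 \<in> C\<close>, of a] by simp
  have "norm (f a) \<le> norm a * 1" for a
    using f(2)[of a] f(2)[of "- a"] p_le_norm[of a] p_le_norm[of "- a"] linear_neg[OF f(1), of a] by simp
  then have "bounded_linear f" using f(1) by (intro bounded_linear_intro[where K = 1]) (auto simp: linear_add linear_scale)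
  moreover have "0 < f u" using f(3) infdist_pos_not_in_closed[OF assms(1) C assms(5)] by (simp add: p_def)
  moreover have "f c \<le> 0" if "c \<in> C" for c using f(2)[of c] that by (simp add: p_def)
  ultimately show ?thesis by (intro exI[of _ "Blinfun f"]) (simp add: bounded_linear_Blinfun_apply)
qed

section \<open>The secant inequality for the Bouligand differential\<close>

lemma gateaux_deriv_unique:
  assumes "gateaux_deriv S y G" "gateaux_deriv S y G'"
  shows "G = G'"
proof (rule blinfun_eqI)
  fix z
  have "at_right (0::real) \<noteq> bot" by simp
  show "G z = G' z"
    using assms unfolding gateaux_deriv_def by (metis tendsto_unique[OF \<open>at_right 0 \<noteq> bot\<close>])
qed

lemma gateaux_deriv_gateaux:
  assumes "y \<in> gateaux_points S"
  shows "gateaux_deriv S y (gateaux S y)"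
proof -
  obtain G where G: "gateaux_deriv S y G" using assms unfolding gateaux_points_def by auto
  have "gateaux S y = G" unfolding gateaux_def using G gateaux_deriv_unique by blast
  then show ?thesis using G by simp
qed

locale convex_lipschitz_operator =
  fixes M :: "'w measure" and J :: "'y::banach \<Rightarrow> 'w \<Rightarrow> real" and E :: "'u::banach \<Rightarrow> 'x::banach"
    and S :: "'x \<Rightarrow> 'y" and q r :: ennreal
  assumes q: "1 \<le> q" and r: "1 \<le> r"
    and Y_emb: "compact_Lp_embedding M q J"
    and U_emb: "compact_embedding E"
    and S_convex: "\<And>x1 x2 lam. 0 \<le> lam \<Longrightarrow> lam \<le> 1 \<Longrightarrow>
        AE \<omega> in M. J (S (lam *\<^sub>R x1 + (1 - lam) *\<^sub>R x2)) \<omega> \<le> lam * J (S x1) \<omega> + (1 - lam) * J (S x2) \<omega>"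
    and S_lip: "\<And>x. \<exists>C>0. \<exists>\<epsilon>>0.
        (\<forall>x1 x2. norm (x1 - x) \<le> \<epsilon> \<longrightarrow> norm (x2 - x) \<le> \<epsilon> \<longrightarrow>
            norm (S x1 - S x2) \<le> C * norm (x1 - x2)) \<and>
        (\<forall>x1 z. norm (x1 - x) \<le> \<epsilon> \<longrightarrow> norm z \<le> \<epsilon> \<longrightarrow>
            Lpnorm M r (J (S (x1 + E z) - S x1)) \<le> ennreal (C * norm z))"
begin

lemma J_measurable: "J y \<in> borel_measurable M"
  using Y_emb unfolding compact_Lp_embedding_def by blast

lemma J_linear_AE: "AE \<omega> in M. J (a *\<^sub>R y + y') \<omega> = a * J y \<omega> + J y' \<omega>"
  using Y_emb unfolding compact_Lp_embedding_def by blast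

lemma J_add_AE: "AE \<omega> in M. J (y + y') \<omega> = J y \<omega> + J y' \<omega>"
  using J_linear_AE[of 1 y y'] by simp

lemma J_zero_AE: "AE \<omega> in M. J 0 \<omega> = 0"
  using J_linear_AE[of 1 0 0] by simp

lemma J_scaleR_AE: "AE \<omega> in M. J (a *\<^sub>R y) \<omega> = a * J y \<omega>"
  using J_linear_AE[of a y 0] J_zero_AE by eventually_elim simp

lemma J_diff_AE: "AE \<omega> in M. J (y - y') \<omega> = J y \<omega> - J y' \<omega>"
  using J_linear_AE[of "-1" y' y] by simp

lemma J_minus_AE: "AE \<omega> in M. J (- y) \<omega> = - J y \<omega>"
  using J_scaleR_AE[of "-1" y] by simp

lemma J_Lipschitz: "\<exists>C>0. \<forall>y y'. Lpnorm M q (\<lambda>\<omega>. J y \<omega> - J y' \<omega>) \<le> ennreal (C * norm (y - y'))"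
proof -
  obtain C0 where C0: "\<And>y. Lpnorm M q (J y) \<le> ennreal (C0 * norm y)"
    using Y_emb unfolding compact_Lp_embedding_def by blast
  have "Lpnorm M q (\<lambda>\<omega>. J y \<omega> - J y' \<omega>) \<le> ennreal (max C0 1 * norm (y - y'))" for y y'
  proof (rule Lpnorm_le_AE_mono[OF q _ _ _ order.trans[OF C0]])
    show "AE \<omega> in M. \<bar>J y \<omega> - J y' \<omega>\<bar> \<le> \<bar>J (y - y') \<omega>\<bar>"
      using J_diff_AE[of y y'] by eventually_elim simp
  qed (auto intro!: ennreal_leI mult_right_mono borel_measurable_diff J_measurable)
  then show ?thesis by (intro exI[of _ "max C0 1"]) auto
qed

lemma J_compact:
  fixes ys :: "nat \<Rightarrow> 'y"
  assumes "bounded (range ys)"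
  obtains \<sigma> f where "strict_mono \<sigma>" "f \<in> borel_measurable M"
    "(\<lambda>n. Lpnorm M q (\<lambda>\<omega>. J (ys (\<sigma> n)) \<omega> - f \<omega>)) \<longlonglongrightarrow> 0"
proof -
  have "\<exists>\<sigma> f. strict_mono \<sigma> \<and> f \<in> borel_measurable M \<and> Lpnorm M q f < \<infinity> \<and>
      (\<lambda>n. Lpnorm M q (\<lambda>\<omega>. J (ys (\<sigma> n)) \<omega> - f \<omega>)) \<longlonglongrightarrow> 0"
    using Y_emb assms unfolding compact_Lp_embedding_def by blast
  then show ?thesis using that by blast
qed

lemma E_bounded_linear: "bounded_linear E"
  using U_emb unfolding compact_embedding_def by blast

lemma E_compact:
  fixes us :: "nat \<Rightarrow> 'u"
  assumes "bounded (range us)"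
  obtains \<sigma> l where "strict_mono \<sigma>" "(\<lambda>n. E (us (\<sigma> n))) \<longlonglongrightarrow> l"
proof -
  have "\<exists>\<sigma> l. strict_mono \<sigma> \<and> (\<lambda>n. E (us (\<sigma> n))) \<longlonglongrightarrow> l"
    using U_emb assms unfolding compact_embedding_def by blast
  then show ?thesis using that by blast
qed

lemma S_continuous:
  assumes "xs \<longlonglongrightarrow> a"
  shows "(\<lambda>n. S (xs n)) \<longlonglongrightarrow> S a"
proof -
  obtain C \<epsilon> where C: "C > 0" "\<epsilon> > 0" and L: "\<And>x1 x2. norm (x1 - a) \<le> \<epsilon> \<Longrightarrow> norm (x2 - a) \<le> \<epsilon> \<Longrightarrow>
      norm (S x1 - S x2) \<le> C * norm (x1 - x2)"
    using S_lip[of a] by blast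
  have dist: "(\<lambda>n. norm (xs n - a)) \<longlonglongrightarrow> 0" using assms by (simp add: LIM_zero_iff tendsto_norm_zero)
  have "(\<lambda>n. S (xs n) - S a) \<longlonglongrightarrow> 0"
  proof (rule Lim_null_comparison)
    show "eventually (\<lambda>n. norm (S (xs n) - S a) \<le> C * norm (xs n - a)) sequentially"
      using order_tendstoD(2)[OF dist C(2)] by eventually_elim (rule L; use C in auto)
    show "(\<lambda>n. C * norm (xs n - a)) \<longlonglongrightarrow> 0" using tendsto_mult_right_zero[OF dist] .
  qed
  then show ?thesis by (simp add: LIM_zero_iff)
qed

definition nonpos_cone :: "'y set" where
  "nonpos_cone = {y. AE \<omega> in M. J y \<omega> \<le> 0}"

lemma nonpos_cone_closed: "closed nonpos_cone"
  unfolding closed_sequential_limits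
proof (intro allI impI, elim conjE)
  fix ys y assume ys: "\<forall>n. ys n \<in> nonpos_cone" and lim: "ys \<longlonglongrightarrow> y"
  obtain C where C: "C > 0" "\<And>y y'. Lpnorm M q (\<lambda>\<omega>. J y \<omega> - J y' \<omega>) \<le> ennreal (C * norm (y - y'))"
    using J_Lipschitz by blast
  have "AE \<omega> in M. max (J y \<omega>) 0 = 0"
  proof (rule AE_zero_if_Lpnorm_arbitrarily_small[OF q])
    fix e :: real assume "0 < e"
    have "(\<lambda>n. y - ys n) \<longlonglongrightarrow> 0" using tendsto_diff[OF tendsto_const[of y] lim] by simp
    then have "(\<lambda>n. C * norm (y - ys n)) \<longlonglongrightarrow> 0" by (intro tendsto_mult_right_zero tendsto_norm_zero)
    then have "eventually (\<lambda>n. C * norm (y - ys n) < e) sequentially"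
      using \<open>0 < e\<close> by (rule order_tendstoD(2))
    then obtain n where n: "C * norm (y - ys n) < e" by (auto simp: eventually_sequentially)
    have "Lpnorm M q (\<lambda>\<omega>. max (J y \<omega>) 0) \<le> ennreal (C * norm (y - ys n))"
    proof (rule Lpnorm_le_AE_mono[OF q _ _ _ C(2)[of y "ys n"]])
      show "AE \<omega> in M. \<bar>max (J y \<omega>) 0\<bar> \<le> \<bar>J y \<omega> - J (ys n) \<omega>\<bar>"
        using ys[rule_format, of n] unfolding nonpos_cone_def by (auto elim!: eventually_mono)
      show "0 \<le> C * norm (y - ys n)" using C by simp
    qed (auto intro!: borel_measurable_diff borel_measurable_max J_measurable)
    also have "\<dots> \<le> ennreal e" using n by (intro ennreal_leI) simp
    finally show "Lpnorm M q (\<lambda>\<omega>. max (J y \<omega>) 0) \<le> ennreal e" .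
  qed (auto intro!: borel_measurable_max J_measurable)
  then show "y \<in> nonpos_cone" unfolding nonpos_cone_def by (auto elim!: eventually_mono)
qed

text \<open>Weak sequential closedness of the cone: a closed convex cone is the intersection of
  the half-spaces containing it.\<close>

lemma nonpos_cone_weakly_closed:
  assumes "\<And>n. ys n \<in> nonpos_cone" "weakly_tendsto ys y"
  shows "y \<in> nonpos_cone"
proof (rule ccontr)
  assume "y \<notin> nonpos_cone"
  moreover have "a + b \<in> nonpos_cone" if "a \<in> nonpos_cone" "b \<in> nonpos_cone" for a b
    using that J_add_AE[of a b] unfolding nonpos_cone_def by (auto elim!: eventually_rev_mp)
  moreover have "t *\<^sub>R a \<in> nonpos_cone" if "a \<in> nonpos_cone" "0 \<le> t" for a t
    using that J_scaleR_AE[of t a] unfolding nonpos_cone_def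
    by (auto elim!: eventually_rev_mp simp: mult_nonneg_nonpos)
  moreover have "0 \<in> nonpos_cone" using J_zero_AE unfolding nonpos_cone_def by (auto elim!: eventually_mono)
  ultimately obtain f :: "'y \<Rightarrow>\<^sub>L real" where f: "0 < f y" "\<forall>c\<in>nonpos_cone. f c \<le> 0"
    using separate_point_closed_convex_cone[OF nonpos_cone_closed] by blast
  have "(\<lambda>n. f (ys n)) \<longlonglongrightarrow> f y" using assms(2) unfolding weakly_tendsto_def by blast
  then have "f y \<le> 0" by (rule LIMSEQ_le_const2) (use f(2) assms(1) in auto)
  then show False using f by simp
qed

text \<open>Convexity of \<open>J \<circ> S\<close> makes difference quotients along a ray increasing; at a Gateaux
  point the limiting quotient is therefore below the secant slope.\<close>

lemma gateaux_secant_in_nonpos_cone: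
  assumes "y \<in> gateaux_points S"
  shows "gateaux S y v - (S (y + v) - S y) \<in> nonpos_cone"
proof -
  have lim: "((\<lambda>t. (S (y + t *\<^sub>R v) - S y) /\<^sub>R t - (S (y + v) - S y))
      \<longlongrightarrow> gateaux S y v - (S (y + v) - S y)) (at_right 0)"
    using gateaux_deriv_gateaux[OF assms] unfolding gateaux_deriv_def by (intro tendsto_intros) auto
  have "(S (y + t *\<^sub>R v) - S y) /\<^sub>R t - (S (y + v) - S y) \<in> nonpos_cone" if t: "0 < t" "t < 1" for t
  proof -
    have "AE \<omega> in M. J (S (y + t *\<^sub>R v)) \<omega> \<le> t * J (S (y + v)) \<omega> + (1 - t) * J (S y) \<omega>"
      using S_convex[of t "y + v" y] t by (simp add: algebra_simps)
    then show ?thesis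
    unfolding nonpos_cone_def mem_Collect_eq
    using J_diff_AE[of "(S (y + t *\<^sub>R v) - S y) /\<^sub>R t" "S (y + v) - S y"]
      J_scaleR_AE[of "inverse t" "S (y + t *\<^sub>R v) - S y"] J_diff_AE[of "S (y + t *\<^sub>R v)" "S y"]
      J_diff_AE[of "S (y + v)" "S y"]
  proof eventually_elim
    case (elim \<omega>)
    have "J (S (y + t *\<^sub>R v)) \<omega> - J (S y) \<omega> \<le> t * (J (S (y + v)) \<omega> - J (S y) \<omega>)"
      using elim(1) by (simp add: algebra_simps)
    then have "inverse t * (J (S (y + t *\<^sub>R v)) \<omega> - J (S y) \<omega>) \<le> J (S (y + v)) \<omega> - J (S y) \<omega>"
      using t by (simp add: field_simps)
    then show ?case using elim by simp
  qed
  qed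
  then have "eventually (\<lambda>t. (S (y + t *\<^sub>R v) - S y) /\<^sub>R t - (S (y + v) - S y) \<in> nonpos_cone) (at_right 0)"
    unfolding eventually_at_right_field by (intro exI[of _ 1]) auto
  then show ?thesis using Lim_in_closed_set[OF nonpos_cone_closed _ _ lim] by simp
qed

lemma bouligand_secant_in_nonpos_cone:
  assumes "G \<in> bouligand_sw S y"
  shows "G v - (S (y + v) - S y) \<in> nonpos_cone"
proof -
  obtain xs where xs: "\<And>n. xs n \<in> gateaux_points S" "xs \<longlonglongrightarrow> y"
    and weak: "\<And>z. weakly_tendsto (\<lambda>n. gateaux S (xs n) z) (G z)"
    using assms unfolding bouligand_sw_def by blast
  show ?thesis
  proof (rule nonpos_cone_weakly_closed)
    show "gateaux S (xs n) v - (S (xs n + v) - S (xs n)) \<in> nonpos_cone" for n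
      by (rule gateaux_secant_in_nonpos_cone[OF xs(1)])
    have S_lim: "(\<lambda>n. S (xs n + v)) \<longlonglongrightarrow> S (y + v)" "(\<lambda>n. S (xs n)) \<longlonglongrightarrow> S y"
      using xs(2) by (auto intro!: S_continuous tendsto_intros)
    show "weakly_tendsto (\<lambda>n. gateaux S (xs n) v - (S (xs n + v) - S (xs n))) (G v - (S (y + v) - S y))"
      unfolding weakly_tendsto_def
    proof
      fix f :: "'y \<Rightarrow>\<^sub>L real"
      have l1: "(\<lambda>n. f (gateaux S (xs n) v)) \<longlonglongrightarrow> f (G v)"
        using weak[of v] unfolding weakly_tendsto_def by blast
      have "(\<lambda>n. f (gateaux S (xs n) v) - (f (S (xs n + v)) - f (S (xs n))))
          \<longlonglongrightarrow> f (G v) - (f (S (y + v)) - f (S y))"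
        by (intro tendsto_diff l1 blinfun.tendsto[OF tendsto_const] S_lim)
      then show "(\<lambda>n. f (gateaux S (xs n) v - (S (xs n + v) - S (xs n)))) \<longlonglongrightarrow> f (G v - (S (y + v) - S y))"
        by (simp add: blinfun.diff_right)
    qed
  qed
qed

section \<open>Second differences\<close>

definition second_difference :: "'x \<Rightarrow> 'x \<Rightarrow> 'w \<Rightarrow> real" where
  "second_difference x v \<omega> = J (S (x + 2 *\<^sub>R v)) \<omega> - 2 * J (S (x + v)) \<omega> + J (S x) \<omega>"

lemma second_difference_measurable: "second_difference x v \<in> borel_measurable M"
  unfolding second_difference_def using J_measurable by measurable

text \<open>Applying the secant inequality at \<open>x + E z\<close> in the directions \<open>\<plusminus>E z\<close> bounds the
  Newton remainder from above and below by the symmetric second difference.\<close>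

lemma bouligand_remainder_le_second_difference:
  assumes "G \<in> bouligand_sw S (x + E z)"
  shows "AE \<omega> in M. \<bar>J (S (x + E z) - S x - G (E z)) \<omega>\<bar> \<le> second_difference x (E z) \<omega>"
proof -
  define y where "y = x + E z"
  have forward: "G (E z) - (S (x + 2 *\<^sub>R E z) - S y) \<in> nonpos_cone"
    using bouligand_secant_in_nonpos_cone[OF assms[folded y_def], of "E z"]
    by (simp add: y_def scaleR_2 add.assoc)
  have backward: "- G (E z) - (S x - S y) \<in> nonpos_cone"
    using bouligand_secant_in_nonpos_cone[OF assms[folded y_def], of "- E z"]
    by (simp add: y_def blinfun.minus_right)
  show ?thesis
    using forward backward
      J_diff_AE[of "G (E z)" "S (x + 2 *\<^sub>R E z) - S y"] J_diff_AE[of "S (x + 2 *\<^sub>R E z)" "S y"]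
      J_diff_AE[of "- G (E z)" "S x - S y"] J_minus_AE[of "G (E z)"] J_diff_AE[of "S x" "S y"]
      J_diff_AE[of "S y - S x" "G (E z)"] J_diff_AE[of "S y" "S x"]
    unfolding second_difference_def y_def[symmetric] nonpos_cone_def mem_Collect_eq
    by eventually_elim (simp add: abs_le_iff)
qed

definition diff_quotient :: "'x \<Rightarrow> 'x \<Rightarrow> real \<Rightarrow> 'w \<Rightarrow> real" where
  "diff_quotient x w t \<omega> = (J (S (x + t *\<^sub>R w)) \<omega> - J (S x) \<omega>) / t"

lemma diff_quotient_measurable: "diff_quotient x w t \<in> borel_measurable M"
  unfolding diff_quotient_def by (auto intro!: borel_measurable_divide borel_measurable_diff J_measurable)

lemma diff_quotient_mono:
  assumes "0 < s" "s \<le> t"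
  shows "AE \<omega> in M. diff_quotient x w s \<omega> \<le> diff_quotient x w t \<omega>"
proof -
  have "(s / t) *\<^sub>R (x + t *\<^sub>R w) + (1 - s / t) *\<^sub>R x = x + s *\<^sub>R w"
    using assms by (simp add: algebra_simps)
  then have "AE \<omega> in M. J (S (x + s *\<^sub>R w)) \<omega> \<le> (s / t) * J (S (x + t *\<^sub>R w)) \<omega> + (1 - s / t) * J (S x) \<omega>"
    using S_convex[of "s / t" "x + t *\<^sub>R w" x] assms by simp
  then show ?thesis
  proof eventually_elim
    case (elim \<omega>)
    then have "J (S (x + s *\<^sub>R w)) \<omega> - J (S x) \<omega> \<le> (s / t) * (J (S (x + t *\<^sub>R w)) \<omega> - J (S x) \<omega>)"
      by (simp add: algebra_simps)
    then show ?case using assms unfolding diff_quotient_def by (simp add: field_simps)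
  qed
qed

text \<open>The quotients at the dyadic scales \<open>2\<^sup>-\<^sup>m\<close> are the images under \<open>J\<close> of
  \<open>2\<^sup>m (S (x + 2\<^sup>-\<^sup>m w) - S x)\<close>, a bounded sequence in \<open>Y\<close>; compactness of \<open>J\<close> gives an
  \<open>L\<^sup>q\<close>-Cauchy subsequence, and monotonicity in the scale squeezes consecutive terms.\<close>

lemma diff_quotient_dyadic_Cauchy:
  assumes "0 < \<eta>"
  shows "\<exists>k. \<forall>m\<ge>k. Lpnorm M q (\<lambda>\<omega>. diff_quotient x w ((1/2) ^ m) \<omega> - diff_quotient x w ((1/2) ^ (m + 2)) \<omega>)
    \<le> ennreal \<eta>"
proof -
  obtain C \<epsilon> where C: "C > 0" "\<epsilon> > 0" and L: "\<And>x1 x2. norm (x1 - x) \<le> \<epsilon> \<Longrightarrow> norm (x2 - x) \<le> \<epsilon> \<Longrightarrow>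
      norm (S x1 - S x2) \<le> C * norm (x1 - x2)"
    using S_lip[of x] by blast
  define h where "h m = (1/2::real) ^ m" for m
  have h_pos: "0 < h m" for m unfolding h_def by simp
  have h_anti: "m \<le> m' \<Longrightarrow> h m' \<le> h m" for m m' unfolding h_def by (rule power_decreasing) auto
  define \<beta> where "\<beta> m = (2 ^ m) *\<^sub>R (S (x + h m *\<^sub>R w) - S x)" for m
  have J_\<beta>: "AE \<omega> in M. J (\<beta> m) \<omega> = diff_quotient x w (h m) \<omega>" for m
    using J_scaleR_AE[of "2 ^ m" "S (x + h m *\<^sub>R w) - S x"] J_diff_AE[of "S (x + h m *\<^sub>R w)" "S x"]
  proof eventually_elim
    case (elim \<omega>)
    show ?case by (simp only: \<beta>_def diff_quotient_def elim) (simp add: h_def field_simps)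
  qed
  obtain m0 where m0: "h m0 * (norm w + 1) < \<epsilon>"
    using real_arch_pow_inv[of "\<epsilon> / (norm w + 1)" "1/2"] C
    by (auto simp: h_def pos_less_divide_eq[of "norm w + 1", symmetric] add_nonneg_pos)
  have "norm (\<beta> m) \<le> C * norm w" if "m0 \<le> m" for m
  proof -
    have "h m * norm w \<le> h m0 * (norm w + 1)"
      using h_anti[OF that] h_pos[of m] by (intro mult_mono) auto
    then have "norm (S (x + h m *\<^sub>R w) - S x) \<le> C * (h m * norm w)"
      using L[of "x + h m *\<^sub>R w" x] m0 C h_pos[of m] by simp
    then have "norm (\<beta> m) \<le> 2 ^ m * (C * (h m * norm w))" unfolding \<beta>_def by simp
    also have "\<dots> = C * norm w" unfolding h_def by (simp add: power_one_over)
    finally show ?thesis .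
  qed
  then have "bounded (range (\<lambda>n. \<beta> (m0 + n)))"
    unfolding bounded_iff by (intro exI[of _ "C * norm w"]) auto
  then obtain \<sigma> f where \<sigma>: "strict_mono \<sigma>" and f: "f \<in> borel_measurable M"
    and lim: "(\<lambda>n. Lpnorm M q (\<lambda>\<omega>. J (\<beta> (m0 + \<sigma> n)) \<omega> - f \<omega>)) \<longlonglongrightarrow> 0"
    by (rule J_compact)
  obtain n0 where n0: "\<And>n. n0 \<le> n \<Longrightarrow> Lpnorm M q (\<lambda>\<omega>. J (\<beta> (m0 + \<sigma> n)) \<omega> - f \<omega>) < ennreal (\<eta> / 8)"
    using order_tendstoD(2)[OF lim, of "ennreal (\<eta> / 8)"] assms unfolding eventually_sequentially by auto
  have "Lpnorm M q (\<lambda>\<omega>. diff_quotient x w (h m) \<omega> - diff_quotient x w (h (m + 2)) \<omega>) \<le> ennreal \<eta>"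
    if m: "m0 + \<sigma> n0 \<le> m" for m
  proof -
    define n1 where "n1 = max n0 (m + 2)"
    have far: "m + 2 \<le> m0 + \<sigma> n1" using seq_suble[OF \<sigma>, of n1] unfolding n1_def by simp
    have near: "Lpnorm M q (\<lambda>\<omega>. J (\<beta> (m0 + \<sigma> n0)) \<omega> - f \<omega>) \<le> ennreal (\<eta> / 8)"
      using n0[of n0] by simp
    have "Lpnorm M q (\<lambda>\<omega>. f \<omega> - J (\<beta> (m0 + \<sigma> n1)) \<omega>) \<le> ennreal (\<eta> / 8)"
      by (rule Lpnorm_le_AE_mono[OF q _ _ _ less_imp_le[OF n0[of n1]]])
        (use J_measurable f assms in \<open>auto simp: n1_def\<close>)
    then have sum: "Lpnorm M q (\<lambda>\<omega>. (J (\<beta> (m0 + \<sigma> n0)) \<omega> - f \<omega>) + (f \<omega> - J (\<beta> (m0 + \<sigma> n1)) \<omega>))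
        \<le> ennreal (4 * (\<eta> / 8 + \<eta> / 8))"
      using near J_measurable f assms by (intro Lpnorm_add_le[OF q]) auto
    have eighths: "4 * (\<eta> / 8 + \<eta> / 8) = \<eta>" by simp
    show ?thesis
    proof (rule Lpnorm_le_AE_mono[OF q _ _ _ sum[unfolded eighths]])
      show "AE \<omega> in M. \<bar>diff_quotient x w (h m) \<omega> - diff_quotient x w (h (m + 2)) \<omega>\<bar>
          \<le> \<bar>J (\<beta> (m0 + \<sigma> n0)) \<omega> - f \<omega> + (f \<omega> - J (\<beta> (m0 + \<sigma> n1)) \<omega>)\<bar>"
        using J_\<beta>[of "m0 + \<sigma> n0"] J_\<beta>[of "m0 + \<sigma> n1"]
          diff_quotient_mono[OF h_pos h_anti[OF le_add1[of m 2]], of x w]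
          diff_quotient_mono[OF h_pos h_anti[OF m], of x w]
          diff_quotient_mono[OF h_pos h_anti[OF far], of x w]
        by eventually_elim auto
    qed (use J_measurable f diff_quotient_measurable assms in auto)
  qed
  then show ?thesis unfolding h_def by blast
qed

lemma second_difference_along_ray_small:
  assumes "0 < \<eta>"
  shows "\<exists>\<tau>>0. \<forall>t. 0 < t \<longrightarrow> t < \<tau> \<longrightarrow> Lpnorm M q (second_difference x (t *\<^sub>R w)) \<le> ennreal (\<eta> * t)"
proof -
  define h where "h m = (1/2::real) ^ m" for m
  have h_pos: "0 < h m" for m unfolding h_def by simp
  obtain k where k: "\<And>m. k \<le> m \<Longrightarrow>
      Lpnorm M q (\<lambda>\<omega>. diff_quotient x w (h m) \<omega> - diff_quotient x w (h (m + 2)) \<omega>) \<le> ennreal (\<eta> / 2)"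
    using diff_quotient_dyadic_Cauchy[of "\<eta> / 2" x w] assms unfolding h_def by auto
  have "Lpnorm M q (second_difference x (t *\<^sub>R w)) \<le> ennreal (\<eta> * t)" if t: "0 < t" "t < h (k + 1)" for t
  proof -
    have "h (k + 1) \<le> h 1" unfolding h_def by (intro power_decreasing) auto
    then have "2 * t < 1" using t(2) by (simp add: h_def)
    then obtain m where m: "h (Suc m) \<le> 2 * t" "2 * t < h m"
      using exists_dyadic_bracket[of "2 * t"] t(1) unfolding h_def by auto
    have below: "h (m + 2) \<le> t" using m(1) by (simp add: h_def)
    have "k \<le> m"
    proof (rule ccontr)
      assume "\<not> k \<le> m"
      then have "h (k + 1) \<le> h (m + 2)" unfolding h_def by (intro power_decreasing) auto
      then show False using below t(2) by simp
    qed
    have eq: "second_difference x (t *\<^sub>R w) \<omega> = 2 * t * (diff_quotient x w (2 * t) \<omega> - diff_quotient x w t \<omega>)"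
      for \<omega> using t(1) by (simp add: second_difference_def diff_quotient_def field_simps)
    have "AE \<omega> in M. diff_quotient x w t \<omega> \<le> diff_quotient x w (2 * t) \<omega>"
      "AE \<omega> in M. diff_quotient x w (2 * t) \<omega> \<le> diff_quotient x w (h m) \<omega>"
      using m(2) t(1) by (auto intro!: diff_quotient_mono)
    then have bound: "AE \<omega> in M. \<bar>second_difference x (t *\<^sub>R w) \<omega>\<bar>
        \<le> \<bar>2 * t * (diff_quotient x w (h m) \<omega> - diff_quotient x w (h (m + 2)) \<omega>)\<bar>"
      using diff_quotient_mono[OF h_pos below, of x w] unfolding eq
      by eventually_elim (use t(1) in \<open>auto simp: abs_mult intro!: mult_left_mono\<close>)
    have measurable: "(\<lambda>\<omega>. diff_quotient x w (h m) \<omega> - diff_quotient x w (h (m + 2)) \<omega>) \<in> borel_measurable M"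
      by (intro borel_measurable_diff diff_quotient_measurable)
    have "Lpnorm M q (\<lambda>\<omega>. 2 * t * (diff_quotient x w (h m) \<omega> - diff_quotient x w (h (m + 2)) \<omega>))
        \<le> ennreal (\<bar>2 * t\<bar> * (\<eta> / 2))"
      using assms by (intro Lpnorm_scale_le[OF q measurable k[OF \<open>k \<le> m\<close>]]) simp
    then have "Lpnorm M q (second_difference x (t *\<^sub>R w)) \<le> ennreal (\<bar>2 * t\<bar> * (\<eta> / 2))"
      using assms t(1) by (intro Lpnorm_le_AE_mono[OF q _ second_difference_measurable bound])
        (auto intro!: borel_measurable_times borel_measurable_diff diff_quotient_measurable)
    then show ?thesis using t(1) by (simp add: mult.commute)
  qed
  then show ?thesis using h_pos by blast
qed

text \<open>Lipschitz continuity of \<open>S\<close> and of \<open>J\<close> transfers the smallness along the ray through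
  \<open>w\<close> to all directions close to \<open>w\<close>, uniformly for small \<open>t\<close>.\<close>

lemma second_difference_near_direction_small:
  assumes "0 < \<eta>"
  shows "\<exists>\<delta>>0. \<exists>\<tau>>0. \<forall>t e. 0 < t \<longrightarrow> t < \<tau> \<longrightarrow> norm (e - w) < \<delta> \<longrightarrow>
    Lpnorm M q (second_difference x (t *\<^sub>R e)) \<le> ennreal (\<eta> * t)"
proof -
  obtain C \<epsilon> where C: "C > 0" "\<epsilon> > 0" and L: "\<And>x1 x2. norm (x1 - x) \<le> \<epsilon> \<Longrightarrow> norm (x2 - x) \<le> \<epsilon> \<Longrightarrow>
      norm (S x1 - S x2) \<le> C * norm (x1 - x2)"
    using S_lip[of x] by blast
  obtain CJ where CJ: "CJ > 0" "\<And>y y'. Lpnorm M q (\<lambda>\<omega>. J y \<omega> - J y' \<omega>) \<le> ennreal (CJ * norm (y - y'))"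
    using J_Lipschitz by blast
  obtain \<tau>1 where \<tau>1: "\<tau>1 > 0"
    and ray: "\<And>t. 0 < t \<Longrightarrow> t < \<tau>1 \<Longrightarrow> Lpnorm M q (second_difference x (t *\<^sub>R w)) \<le> ennreal (\<eta> / 32 * t)"
    using second_difference_along_ray_small[of "\<eta> / 32" x w] assms by auto
  define \<delta> where "\<delta> = min 1 (\<eta> / (80 * CJ * C))"
  define \<tau> where "\<tau> = min \<tau>1 (\<epsilon> / (2 * (norm w + 1)))"
  have "Lpnorm M q (second_difference x (t *\<^sub>R e)) \<le> ennreal (\<eta> * t)"
    if t: "0 < t" "t < \<tau>" and e: "norm (e - w) < \<delta>" for t e
  proof -
    have "norm e \<le> norm w + norm (e - w)" using norm_triangle_sub[of e w] by simp
    then have norm_e: "norm e \<le> norm w + 1" using e by (simp add: \<delta>_def)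
    have "0 < 2 * (norm w + 1)" by (simp add: add_nonneg_pos)
    moreover have "t < \<epsilon> / (2 * (norm w + 1))" using t(2) by (simp add: \<tau>_def)
    ultimately have "t * (2 * (norm w + 1)) < \<epsilon>" by (simp only: pos_less_divide_eq)
    then have close: "norm (s *\<^sub>R e) \<le> \<epsilon>" "norm (s *\<^sub>R w) \<le> \<epsilon>" if "0 < s" "s \<le> 2 * t" for s
      using that norm_e mult_mono[of s "2 * t" "norm e" "norm w + 1"]
        mult_mono[of s "2 * t" "norm w" "norm w + 1"] by (auto simp: algebra_simps)
    have gap: "CJ * (C * (s * norm (e - w))) \<le> s * (\<eta> / 80)" if "0 < s" for s
    proof -
      have "CJ * C * norm (e - w) \<le> CJ * C * (\<eta> / (80 * CJ * C))"
        using e CJ C by (intro mult_left_mono) (auto simp: \<delta>_def)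
      then show ?thesis using CJ C that by (simp add: field_simps)
    qed
    have direction: "Lpnorm M q (\<lambda>\<omega>. J (S (x + s *\<^sub>R e)) \<omega> - J (S (x + s *\<^sub>R w)) \<omega>) \<le> ennreal (s * (\<eta> / 80))"
      if "0 < s" "s \<le> 2 * t" for s
    proof -
      have "norm (S (x + s *\<^sub>R e) - S (x + s *\<^sub>R w)) \<le> C * norm (s *\<^sub>R e - s *\<^sub>R w)"
        using L[of "x + s *\<^sub>R e" "x + s *\<^sub>R w"] close[OF that] by simp
      also have "\<dots> = C * (s * norm (e - w))" using that by (simp add: scaleR_diff_right[symmetric])
      finally have "CJ * norm (S (x + s *\<^sub>R e) - S (x + s *\<^sub>R w)) \<le> CJ * (C * (s * norm (e - w)))"
        using CJ(1) by (intro mult_left_mono) auto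
      then have "CJ * norm (S (x + s *\<^sub>R e) - S (x + s *\<^sub>R w)) \<le> s * (\<eta> / 80)"
        using gap[OF that(1)] by linarith
      then show ?thesis using CJ(2) order.trans ennreal_leI by blast
    qed
    note measurable_intros = borel_measurable_times borel_measurable_diff borel_measurable_add
      measurable_const J_measurable second_difference_measurable
    have A: "Lpnorm M q (\<lambda>\<omega>. J (S (x + (2 * t) *\<^sub>R e)) \<omega> - J (S (x + (2 * t) *\<^sub>R w)) \<omega>)
        \<le> ennreal (2 * t * (\<eta> / 80))"
      using direction[of "2 * t"] t(1) by simp
    have B: "Lpnorm M q (\<lambda>\<omega>. - 2 * (J (S (x + t *\<^sub>R e)) \<omega> - J (S (x + t *\<^sub>R w)) \<omega>))
        \<le> ennreal (\<bar>- 2\<bar> * (t * (\<eta> / 80)))"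
      using direction[of t] t(1) assms J_measurable by (intro Lpnorm_scale_le[OF q]) auto
    have D: "Lpnorm M q (second_difference x (t *\<^sub>R w)) \<le> ennreal (\<eta> / 32 * t)"
      using ray t by (simp add: \<tau>_def)
    have BD: "Lpnorm M q (\<lambda>\<omega>. - 2 * (J (S (x + t *\<^sub>R e)) \<omega> - J (S (x + t *\<^sub>R w)) \<omega>)
        + second_difference x (t *\<^sub>R w) \<omega>) \<le> ennreal (4 * (\<bar>- 2\<bar> * (t * (\<eta> / 80)) + \<eta> / 32 * t))"
      by (rule Lpnorm_add_le[OF q _ _ B D]) (use t(1) assms in \<open>auto intro!: measurable_intros\<close>)
    have total: "Lpnorm M q (\<lambda>\<omega>. (J (S (x + (2 * t) *\<^sub>R e)) \<omega> - J (S (x + (2 * t) *\<^sub>R w)) \<omega>)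
        + (- 2 * (J (S (x + t *\<^sub>R e)) \<omega> - J (S (x + t *\<^sub>R w)) \<omega>) + second_difference x (t *\<^sub>R w) \<omega>))
        \<le> ennreal (4 * (2 * t * (\<eta> / 80) + 4 * (\<bar>- 2\<bar> * (t * (\<eta> / 80)) + \<eta> / 32 * t)))"
      by (rule Lpnorm_add_le[OF q _ _ A BD]) (use t(1) assms in \<open>auto intro!: measurable_intros\<close>)
    have weights: "4 * (2 * t * (\<eta> / 80) + 4 * (\<bar>- 2\<bar> * (t * (\<eta> / 80)) + \<eta> / 32 * t)) = \<eta> * t"
      by simp
    have split: "(\<lambda>\<omega>. (J (S (x + (2 * t) *\<^sub>R e)) \<omega> - J (S (x + (2 * t) *\<^sub>R w)) \<omega>)
        + (- 2 * (J (S (x + t *\<^sub>R e)) \<omega> - J (S (x + t *\<^sub>R w)) \<omega>) + second_difference x (t *\<^sub>R w) \<omega>))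
        = second_difference x (t *\<^sub>R e)"
      by (auto simp: second_difference_def algebra_simps)
    show ?thesis using total unfolding weights split .
  qed
  moreover have "0 < \<delta>" "0 < \<tau>" using assms CJ C \<tau>1 by (auto simp: \<delta>_def \<tau>_def add_nonneg_pos)
  ultimately show ?thesis by blast
qed

lemma second_difference_Lr_bigO:
  "\<exists>K. eventually (\<lambda>z. Lpnorm M r (second_difference x (E z)) \<le> ennreal (K * norm z)) (at 0)"
proof -
  obtain C \<epsilon> where C: "C > 0" "\<epsilon> > 0" and L: "\<And>x1 z. norm (x1 - x) \<le> \<epsilon> \<Longrightarrow> norm z \<le> \<epsilon> \<Longrightarrow>
      Lpnorm M r (J (S (x1 + E z) - S x1)) \<le> ennreal (C * norm z)"
    using S_lip[of x] by blast
  obtain KE where KE: "KE > 0" "\<And>z. norm (E z) \<le> norm z * KE"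
    using bounded_linear.pos_bounded[OF E_bounded_linear] by blast
  have "Lpnorm M r (second_difference x (E z)) \<le> ennreal (8 * C * norm z)"
    if z: "norm z < min \<epsilon> (\<epsilon> / KE)" for z
  proof -
    have "norm z * KE \<le> \<epsilon>" using z KE by (simp add: field_simps)
    then have small: "norm z \<le> \<epsilon>" "norm (E z) \<le> \<epsilon>" using z KE(2)[of z] by auto
    have forward: "Lpnorm M r (J (S (x + E z + E z) - S (x + E z))) \<le> ennreal (C * norm z)"
      using L[of "x + E z" z] small by simp
    have backward: "Lpnorm M r (J (S x - S (x + E z))) \<le> ennreal (C * norm z)"
      using L[of "x + E z" "- z"] small linear_neg[OF bounded_linear.linear[OF E_bounded_linear], of z]
      by simp
    have sum: "Lpnorm M r (\<lambda>\<omega>. J (S (x + E z + E z) - S (x + E z)) \<omega> + J (S x - S (x + E z)) \<omega>)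
        \<le> ennreal (4 * (C * norm z + C * norm z))"
      by (rule Lpnorm_add_le[OF r _ _ forward backward]) (use C J_measurable in auto)
    have bound: "AE \<omega> in M. \<bar>second_difference x (E z) \<omega>\<bar>
        \<le> \<bar>J (S (x + E z + E z) - S (x + E z)) \<omega> + J (S x - S (x + E z)) \<omega>\<bar>"
      using J_diff_AE[of "S (x + E z + E z)" "S (x + E z)"] J_diff_AE[of "S x" "S (x + E z)"]
      by eventually_elim (simp add: second_difference_def scaleR_2 add.assoc)
    have "Lpnorm M r (second_difference x (E z)) \<le> ennreal (4 * (C * norm z + C * norm z))"
      by (rule Lpnorm_le_AE_mono[OF r _ second_difference_measurable bound sum])
        (use C J_measurable in \<open>auto intro!: borel_measurable_add\<close>)
    then show ?thesis by (simp add: algebra_simps)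
  qed
  moreover have "0 < min \<epsilon> (\<epsilon> / KE)" using C KE by simp
  ultimately have "eventually (\<lambda>z. Lpnorm M r (second_difference x (E z)) \<le> ennreal (8 * C * norm z)) (at 0)"
    unfolding eventually_at dist_norm by (intro exI[of _ "min \<epsilon> (\<epsilon> / KE)"]) simp
  then show ?thesis by blast
qed

text \<open>The \<open>L\<^sup>q\<close> estimate is where compactness of \<open>U \<hookrightarrow> X\<close> enters: the normalised directions of
  a bad sequence \<open>z\<^sub>n \<rightarrow> 0\<close> have a convergent subsequence in \<open>X\<close>.\<close>

lemma second_difference_Lq_littleo:
  assumes "0 < \<eta>"
  shows "eventually (\<lambda>z. Lpnorm M q (second_difference x (E z)) \<le> ennreal (\<eta> * norm z)) (at 0)"
proof (rule ccontr)
  define P where "P z \<longleftrightarrow> Lpnorm M q (second_difference x (E z)) \<le> ennreal (\<eta> * norm z)" for z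
  assume "\<not> eventually P (at 0)"
  then have "\<forall>n. \<exists>z. z \<noteq> 0 \<and> norm z < inverse (real (Suc n)) \<and> \<not> P z"
    unfolding eventually_at by (auto simp: dist_norm)
  then obtain zs where zs: "\<And>n. zs n \<noteq> 0" "\<And>n. norm (zs n) < inverse (real (Suc n))" "\<And>n. \<not> P (zs n)"
    by metis
  define ws where "ws n = (1 / norm (zs n)) *\<^sub>R zs n" for n
  have "bounded (range ws)" unfolding bounded_iff ws_def using zs(1) by (intro exI[of _ 1]) auto
  then obtain \<sigma> w where \<sigma>: "strict_mono \<sigma>" and w: "(\<lambda>n. E (ws (\<sigma> n))) \<longlonglongrightarrow> w"
    by (rule E_compact)
  obtain \<delta> \<tau> where \<delta>: "\<delta> > 0" and \<tau>: "\<tau> > 0" and near: "\<And>t e. 0 < t \<Longrightarrow> t < \<tau> \<Longrightarrow> norm (e - w) < \<delta> \<Longrightarrow>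
      Lpnorm M q (second_difference x (t *\<^sub>R e)) \<le> ennreal (\<eta> * t)"
    using second_difference_near_direction_small[OF assms, of w x] by blast
  have "(\<lambda>n. norm (zs (\<sigma> n))) \<longlonglongrightarrow> 0"
  proof (rule Lim_null_comparison[OF always_eventually[OF allI] LIMSEQ_inverse_real_of_nat])
    fix n
    have "norm (zs (\<sigma> n)) < inverse (real (Suc (\<sigma> n)))" by (rule zs(2))
    also have "\<dots> \<le> inverse (real (Suc n))" using seq_suble[OF \<sigma>, of n] by (simp add: field_simps)
    finally show "norm (norm (zs (\<sigma> n))) \<le> inverse (real (Suc n))" by simp
  qed
  then have "eventually (\<lambda>n. norm (zs (\<sigma> n)) < \<tau>) sequentially" using \<tau> by (rule order_tendstoD)
  moreover have "eventually (\<lambda>n. norm (E (ws (\<sigma> n)) - w) < \<delta>) sequentially"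
    using w \<delta> by (intro order_tendstoD(2)) (simp_all add: LIM_zero_iff tendsto_norm_zero)
  ultimately have "eventually (\<lambda>n. P (zs (\<sigma> n))) sequentially"
  proof eventually_elim
    case (elim n)
    have "E (zs (\<sigma> n)) = norm (zs (\<sigma> n)) *\<^sub>R E (ws (\<sigma> n))"
      using zs(1) linear_scale[OF bounded_linear.linear[OF E_bounded_linear]] by (simp add: ws_def)
    then show ?case
      unfolding P_def using near[OF _ elim] zs(1) by (simp add: mult.commute)
  qed
  then show False using zs(3) by (simp add: eventually_sequentially)
qed

lemma second_difference_Lp_littleo:
  assumes p: "p = q \<or> p \<in> {min q r <..< max q r}" and "0 < \<epsilon>"
  shows "eventually (\<lambda>z. Lpnorm M p (second_difference x (E z)) \<le> ennreal (\<epsilon> * norm z)) (at 0)"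
proof (cases "p = q")
  case True
  then show ?thesis using second_difference_Lq_littleo[OF \<open>0 < \<epsilon>\<close>] by simp
next
  case False
  then have p_between: "min q r < p" "p < max q r" using p by auto
  then have "1 \<le> p" using q r by (auto simp: min_def split: if_splits)
  obtain K where K: "eventually (\<lambda>z. Lpnorm M r (second_difference x (E z)) \<le> ennreal (K * norm z)) (at 0)"
    using second_difference_Lr_bigO by blast
  obtain \<delta> where \<delta>: "\<delta> > 0" and interpolate: "\<And>f. f \<in> borel_measurable M \<Longrightarrow>
      Lpnorm M r f \<le> ennreal (max K 0) \<Longrightarrow> Lpnorm M q f \<le> ennreal \<delta> \<Longrightarrow> Lpnorm M p f \<le> ennreal \<epsilon>"
    using Lpnorm_small_by_interpolation[OF q r p_between, of "max K 0" \<epsilon> M] \<open>0 < \<epsilon>\<close> by auto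
  have "eventually (\<lambda>z::'u. z \<noteq> 0) (at 0)" by (simp add: eventually_at_filter)
  with K second_difference_Lq_littleo[OF \<delta>, of x]
  show ?thesis
  proof eventually_elim
    case (elim z)
    define f where "f \<omega> = (1 / norm z) * second_difference x (E z) \<omega>" for \<omega>
    have f_meas: "f \<in> borel_measurable M"
      unfolding f_def by (intro borel_measurable_times borel_measurable_const second_difference_measurable)
    have "Lpnorm M r (second_difference x (E z)) \<le> ennreal (max K 0 * norm z)"
      using elim(1) by (rule order.trans) (intro ennreal_leI mult_right_mono, auto)
    then have "Lpnorm M r f \<le> ennreal (\<bar>1 / norm z\<bar> * (max K 0 * norm z))"
      unfolding f_def by (rule Lpnorm_scale_le[OF r second_difference_measurable]) simp
    then have "Lpnorm M r f \<le> ennreal (max K 0)" using elim(3) by simp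
    moreover have "Lpnorm M q f \<le> ennreal \<delta>"
      using Lpnorm_scale_le[OF q second_difference_measurable elim(2), of "1 / norm z"] \<delta> elim(3)
      unfolding f_def by simp
    ultimately have "Lpnorm M p f \<le> ennreal \<epsilon>" by (rule interpolate[OF f_meas])
    then have "Lpnorm M p (\<lambda>\<omega>. norm z * f \<omega>) \<le> ennreal (\<bar>norm z\<bar> * \<epsilon>)"
      using \<open>0 < \<epsilon>\<close> by (intro Lpnorm_scale_le[OF \<open>1 \<le> p\<close> f_meas]) auto
    moreover have "(\<lambda>\<omega>. norm z * f \<omega>) = second_difference x (E z)" using elim(3) by (auto simp: f_def)
    ultimately show ?case by (simp add: mult.commute)
  qed
qed

theorem Newton_differentiable:
  assumes "p = q \<or> p \<in> {min q r <..< max q r}"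
  shows "((\<lambda>z. (SUP G \<in> bouligand_sw S (x + E z).
      Lpnorm M p (J (S (x + E z) - S x - blinfun_apply G (E z))) / ennreal (norm z))) \<longlongrightarrow> 0) (at 0)"
proof (rule ennreal_tendsto_0I)
  fix \<epsilon> :: real assume "0 < \<epsilon>"
  have "1 \<le> p" using assms q r by (auto simp: min_def split: if_splits)
  have "eventually (\<lambda>z::'u. z \<noteq> 0) (at 0)" by (simp add: eventually_at_filter)
  with second_difference_Lp_littleo[OF assms \<open>0 < \<epsilon>\<close>, of x]
  show "eventually (\<lambda>z. (SUP G \<in> bouligand_sw S (x + E z).
      Lpnorm M p (J (S (x + E z) - S x - blinfun_apply G (E z))) / ennreal (norm z)) \<le> ennreal \<epsilon>) (at 0)"
  proof eventually_elim
    case (elim z)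
    show ?case
    proof (rule SUP_least)
      fix G assume "G \<in> bouligand_sw S (x + E z)"
      then have "AE \<omega> in M. \<bar>J (S (x + E z) - S x - G (E z)) \<omega>\<bar> \<le> \<bar>second_difference x (E z) \<omega>\<bar>"
        by (rule bouligand_remainder_le_second_difference[THEN eventually_mono]) simp
      then have "Lpnorm M p (J (S (x + E z) - S x - G (E z))) \<le> ennreal (\<epsilon> * norm z)"
        using \<open>0 < \<epsilon>\<close>
        by (intro Lpnorm_le_AE_mono[OF \<open>1 \<le> p\<close> second_difference_measurable J_measurable _ elim(1)]) auto
      then have "Lpnorm M p (J (S (x + E z) - S x - G (E z))) / ennreal (norm z)
          \<le> ennreal (\<epsilon> * norm z) / ennreal (norm z)"
        by (rule divide_right_mono_ennreal)
      also have "\<dots> = ennreal \<epsilon>" using elim(2) \<open>0 < \<epsilon>\<close> by (simp add: divide_ennreal)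
      finally show "Lpnorm M p (J (S (x + E z) - S x - G (E z))) / ennreal (norm z) \<le> ennreal \<epsilon>" .
    qed
  qed
qed

end

theorem mainTheorem7:
  fixes M :: "'w measure"
    and J :: "'y::banach \<Rightarrow> 'w \<Rightarrow> real"
    and E :: "'u::banach \<Rightarrow> 'x::banach"
    and S :: "'x \<Rightarrow> 'y"
    and p q r :: ennreal
  assumes complete: "complete_measure M"
    and q: "1 \<le> q" and r: "1 \<le> r"
    and Y_sep: "separable_nv TYPE('y)" and Y_refl: "reflexive_nv TYPE('y)"
    and Y_emb: "compact_Lp_embedding M q J"
    and X_sep: "separable_nv TYPE('x)"
    and U_refl: "reflexive_nv TYPE('u)"
    and U_emb: "compact_embedding E"
    and S_convex: "\<And>x1 x2 lam. 0 \<le> lam \<Longrightarrow> lam \<le> 1 \<Longrightarrow>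
        AE \<omega> in M. J (S (lam *\<^sub>R x1 + (1 - lam) *\<^sub>R x2)) \<omega> \<le> lam * J (S x1) \<omega> + (1 - lam) * J (S x2) \<omega>"
    and S_lip: "\<And>x. \<exists>C>0. \<exists>\<epsilon>>0.
        (\<forall>x1 x2. norm (x1 - x) \<le> \<epsilon> \<longrightarrow> norm (x2 - x) \<le> \<epsilon> \<longrightarrow>
            norm (S x1 - S x2) \<le> C * norm (x1 - x2)) \<and>
        (\<forall>x1 z. norm (x1 - x) \<le> \<epsilon> \<longrightarrow> norm z \<le> \<epsilon> \<longrightarrow>
            Lpnorm M r (J (S (x1 + E z) - S x1)) \<le> ennreal (C * norm z))"
    and p: "p = q \<or> p \<in> {min q r <..< max q r}"
  shows "\<forall>x. ((\<lambda>z. (SUP G \<in> bouligand_sw S (x + E z).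
              Lpnorm M p (J (S (x + E z) - S x - blinfun_apply G (E z))) / ennreal (norm z)))
            \<longlongrightarrow> 0) (at 0)"
proof
  fix x
  interpret convex_lipschitz_operator M J E S q r
    using q r Y_emb U_emb S_convex S_lip by unfold_locales
  show "((\<lambda>z. (SUP G \<in> bouligand_sw S (x + E z).
      Lpnorm M p (J (S (x + E z) - S x - blinfun_apply G (E z))) / ennreal (norm z))) \<longlongrightarrow> 0) (at 0)"
    using Newton_differentiable[OF p] .
qed

end
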